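(* Let $(X,b,m)$ be a connected weighted graph satisfying conditions (B) and (M). Let $\Omega\subset X$ be non-empty with $\Omega\ne X$, and assume $\mathrm{vol}(\Omega)<\infty$ and $\mathrm{Inr}(\Omega)<\infty$. Then: (a) $\displaystyle \lambda_\Omega\ge \frac{1}{\mathrm{Inr}(\Omega)\,\mathrm{vol}(\Omega)}$. (b) If moreover $\mathrm{vol}(X)<\infty$, then $\displaystyle \lambda_\Omega\le \|H\|\,\frac{\mathrm{vol}(X)-\mathrm{vol}(\Omega)}{\mathrm{vol}(X)}$.
   Context: A weighted graph $(X,b,m)$ consists of a countable set $X$, a symmetric function $b:X\times X\to[0,\infty)$ with $b(x,x)=0$ and $\sum_{y}b(x,y)<\infty$ for all $x$, and $m:X\to(0,\infty)$; $\mathrm{vol}(A):=\sum_{x\in A}m(x)$. Condition (B): $\delta:=\sup_{x}\frac{1}{m(x)}\sum_{y}b(x,y)<\infty$. Condition (M): $\sup_x m(x)<\infty$. On $\ell^2(X,m)=\{f:X\to\mathbb{C}: \sum_x|f(x)|^2m(x)<\infty\}$ consider the bounded form $\mathcal{E}(f,g)=\frac12\sum_{x,y}b(x,y)(f(x)-f(y))(\overline{g(x)}-\overline{g(y)})$ and the associated bounded selfadjoint operator $(Hf)(x)=\frac{1}{m(x)}\sum_y b(x,y)(f(x)-f(y))$. A path is $\gamma=(x_0,\dots,x_k)$ with $b(x_j,x_{j+1})>0$, of length $L(\gamma)=\sum_{j=0}^{k-1}1/b(x_j,x_{j+1})$ (trivial paths have length $0$); connected means any two points are joined by a path; $d(x,y)$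 is the infimum of lengths of paths from $x$ to $y$, and $U_r(x):=\{y: d(x,y)<r\}$. For $\Omega\subset X$, identify $\ell^2(\Omega,m)$ with $\{f\in\ell^2(X,m): f=0 \text{ on } X\setminus\Omega\}$; $\mathcal{E}_\Omega$ is the restriction of $\mathcal{E}$ to this space, $H_\Omega$ the associated selfadjoint operator on $\ell^2(\Omega,m)$ (the Dirichlet Laplacian), and $\lambda_\Omega:=\min\sigma(H_\Omega)$. The inradius is $\mathrm{Inr}(\Omega):=\sup\{r>0:\exists x\in\Omega \text{ with } U_r(x)\subset\Omega\}$. *)

theory Defs
  imports "HOL-Analysis.Analysis"
begin

definition weighted_graph :: "('a::countable \<Rightarrow> 'a \<Rightarrow> real) \<Rightarrow> ('a \<Rightarrow> real) \<Rightarrow> bool" where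
  "weighted_graph b m \<longleftrightarrow>
     (\<forall>x y. b x y \<ge> 0) \<and> (\<forall>x y. b x y = b y x) \<and> (\<forall>x. b x x = 0) \<and>
     (\<forall>x. (\<lambda>y. b x y) summable_on UNIV) \<and> (\<forall>x. m x > 0)"

definition condB :: "('a \<Rightarrow> 'a \<Rightarrow> real) \<Rightarrow> ('a \<Rightarrow> real) \<Rightarrow> bool" where
  "condB b m \<longleftrightarrow> bdd_above (range (\<lambda>x. (\<Sum>\<^sub>\<infinity>y. b x y) / m x))"

definition condM :: "('a \<Rightarrow> real) \<Rightarrow> bool" where
  "condM m \<longleftrightarrow> bdd_above (range m)"

definition vol :: "('a \<Rightarrow> real) \<Rightarrow> 'a set \<Rightarrow> ennreal" where
  "vol m A = (\<Sum>\<^sub>\<infinity>x\<in>A. ennreal (m x))"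

definition is_path :: "('a \<Rightarrow> 'a \<Rightarrow> real) \<Rightarrow> 'a list \<Rightarrow> 'a \<Rightarrow> 'a \<Rightarrow> bool" where
  "is_path b p x y \<longleftrightarrow> p \<noteq> [] \<and> hd p = x \<and> last p = y \<and>
     (\<forall>i. Suc i < length p \<longrightarrow> b (p ! i) (p ! Suc i) > 0)"

definition path_length :: "('a \<Rightarrow> 'a \<Rightarrow> real) \<Rightarrow> 'a list \<Rightarrow> real" where
  "path_length b p = (\<Sum>i<length p - 1. 1 / b (p ! i) (p ! Suc i))"

definition graph_connected :: "('a \<Rightarrow> 'a \<Rightarrow> real) \<Rightarrow> bool" where
  "graph_connected b \<longleftrightarrow> (\<forall>x y. \<exists>p. is_path b p x y)"

definition gdist :: "('a \<Rightarrow> 'a \<Rightarrow> real) \<Rightarrow> 'a \<Rightarrow> 'a \<Rightarrow> real" where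
  "gdist b x y = Inf {path_length b p | p. is_path b p x y}"

definition gball :: "('a \<Rightarrow> 'a \<Rightarrow> real) \<Rightarrow> 'a \<Rightarrow> real \<Rightarrow> 'a set" where
  "gball b x r = {y. gdist b x y < r}"

definition inradius :: "('a \<Rightarrow> 'a \<Rightarrow> real) \<Rightarrow> 'a set \<Rightarrow> ereal" where
  "inradius b \<Omega> = Sup {ereal r | r. r > 0 \<and> (\<exists>x\<in>\<Omega>. gball b x r \<subseteq> \<Omega>)}"

text \<open>The space l^2(Omega,m), embedded as functions vanishing outside Omega.\<close>

definition ell2 :: "('a \<Rightarrow> real) \<Rightarrow> 'a set \<Rightarrow> ('a \<Rightarrow> complex) set" where
  "ell2 m \<Omega> = {f. (\<forall>x. x \<notin> \<Omega> \<longrightarrow> f x = 0) \<and> (\<lambda>x. (cmod (f x))\<^sup>2 * m x) summable_on UNIV}"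

definition l2inner :: "('a \<Rightarrow> real) \<Rightarrow> ('a \<Rightarrow> complex) \<Rightarrow> ('a \<Rightarrow> complex) \<Rightarrow> complex" where
  "l2inner m f g = (\<Sum>\<^sub>\<infinity>x. f x * cnj (g x) * complex_of_real (m x))"

definition l2norm :: "('a \<Rightarrow> real) \<Rightarrow> ('a \<Rightarrow> complex) \<Rightarrow> real" where
  "l2norm m f = sqrt (\<Sum>\<^sub>\<infinity>x. (cmod (f x))\<^sup>2 * m x)"

definition energy :: "('a \<Rightarrow> 'a \<Rightarrow> real) \<Rightarrow> ('a \<Rightarrow> complex) \<Rightarrow> ('a \<Rightarrow> complex) \<Rightarrow> complex" where
  "energy b f g = (1/2) * (\<Sum>\<^sub>\<infinity>(x,y). complex_of_real (b x y) * (f x - f y) * cnj (g x - g y))"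

definition laplacian :: "('a \<Rightarrow> 'a \<Rightarrow> real) \<Rightarrow> ('a \<Rightarrow> real) \<Rightarrow> ('a \<Rightarrow> complex) \<Rightarrow> 'a \<Rightarrow> complex" where
  "laplacian b m f x = (1 / complex_of_real (m x)) *
      (\<Sum>\<^sub>\<infinity>y. complex_of_real (b x y) * (f x - f y))"

definition laplacian_norm :: "('a \<Rightarrow> 'a \<Rightarrow> real) \<Rightarrow> ('a \<Rightarrow> real) \<Rightarrow> real" where
  "laplacian_norm b m = Sup {l2norm m (laplacian b m f) | f. f \<in> ell2 m UNIV \<and> l2norm m f \<le> 1}"

text \<open>Dirichlet Laplacian H_Omega: the selfadjoint operator on l^2(Omega,m)
  associated with the restricted form E_Omega, i.e. E(f,g) = <H_Omega f, g>.\<close>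

definition dirichlet_laplacian :: "('a \<Rightarrow> 'a \<Rightarrow> real) \<Rightarrow> ('a \<Rightarrow> real) \<Rightarrow> 'a set \<Rightarrow> ('a \<Rightarrow> complex) \<Rightarrow> ('a \<Rightarrow> complex)" where
  "dirichlet_laplacian b m \<Omega> f =
     (THE u. u \<in> ell2 m \<Omega> \<and> (\<forall>g \<in> ell2 m \<Omega>. energy b f g = l2inner m u g))"

definition op_spectrum :: "('a \<Rightarrow> complex) set \<Rightarrow> (('a \<Rightarrow> complex) \<Rightarrow> ('a \<Rightarrow> complex)) \<Rightarrow> complex set" where
  "op_spectrum V A = {z. \<not> bij_betw (\<lambda>f x. A f x - z * f x) V V}"

definition dirichlet_bottom :: "('a \<Rightarrow> 'a \<Rightarrow> real) \<Rightarrow> ('a \<Rightarrow> real) \<Rightarrow> 'a set \<Rightarrow> real" where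
  "dirichlet_bottom b m \<Omega> =
     Inf {t::real. complex_of_real t \<in> op_spectrum (ell2 m \<Omega>) (dirichlet_laplacian b m \<Omega>)}"

end

theory Submission
  imports Defs
begin

text \<open>
  Both bounds are statements about the Rayleigh quotient \<open>E(f,f) / \<parallel>f\<parallel>\<^sup>2\<close> on
  \<open>\<ell>\<^sup>2(\<Omega>,m)\<close>. Here the spectrum is defined algebraically (\<open>H\<^sub>\<Omega> - t\<close> not bijective), so we
  first show that its bottom is the infimum of the Rayleigh quotient: below the infimum
  \<open>H\<^sub>\<Omega> - t\<close> is coercive, hence bijective by Banach's fixed point theorem; at the infimum it
  has an approximate kernel, hence no bounded inverse, while by the Baire category theorem
  the inverse of a bijective bounded symmetric operator is bounded.

  (a) For \<open>x \<in> \<Omega>\<close> and \<open>\<epsilon> > 0\<close> there is a path of length \<open>< Inr(\<Omega>) + \<epsilon>\<close> from \<open>x\<close> to a point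
  outside \<open>\<Omega>\<close>, where \<open>f\<close> vanishes; Cauchy-Schwarz along the path gives
  \<open>|f(x)|\<^sup>2 \<le> (Inr(\<Omega>) + \<epsilon>) E(f,f)\<close>, and summing over \<open>\<Omega>\<close> gives \<open>\<parallel>f\<parallel>\<^sup>2 \<le> Inr(\<Omega>) vol(\<Omega>) E(f,f)\<close>.

  (b) With \<open>A = vol(\<Omega>)\<close> and \<open>B = vol(X) - A\<close>, the function equal to \<open>B\<close> on \<open>\<Omega>\<close> and to \<open>-A\<close>
  off \<open>\<Omega>\<close> has the energy of \<open>(A + B) 1\<^sub>\<Omega>\<close>, and its energy is at most \<open>\<parallel>H\<parallel>\<close> times its squared
  norm \<open>AB(A + B)\<close>; so the Rayleigh quotient of \<open>1\<^sub>\<Omega>\<close> is at most \<open>\<parallel>H\<parallel> B / (A + B)\<close>.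
\<close>

section \<open>Inequalities and infinite sums\<close>

lemma two_mult_le_weighted_squares: "t > 0 \<Longrightarrow> 2 * (a::real) * c \<le> t * a\<^sup>2 + c\<^sup>2 / t"
proof -
  assume t: "t > 0"
  have "0 \<le> (t * a - c)\<^sup>2" by simp
  then have "2 * t * a * c \<le> t\<^sup>2 * a\<^sup>2 + c\<^sup>2" by (simp add: power2_eq_square algebra_simps)
  then have "2 * a * c \<le> (t\<^sup>2 * a\<^sup>2 + c\<^sup>2) / t" using t by (simp add: field_simps)
  also have "\<dots> = t * a\<^sup>2 + c\<^sup>2 / t" using t by (simp add: field_simps power2_eq_square)
  finally show ?thesis .
qed

lemma sq_le_mult_if_amgm_bound:
  fixes a A B :: real
  assumes "a \<ge> 0" "A \<ge> 0" "B \<ge> 0" "\<And>t. t > 0 \<Longrightarrow> 2 * a \<le> t * A + B / t"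
  shows "a\<^sup>2 \<le> A * B"
proof (rule ccontr)
  assume c: "\<not> a\<^sup>2 \<le> A * B"
  then have ap: "a > 0" using assms by (cases "a = 0") (auto simp: less_le)
  show False
  proof (cases "A > 0")
    case True
    have "2 * a \<le> (a/A) * A + B / (a/A)" using assms(4)[of "a/A"] ap True by simp
    then have "a \<le> A * B / a" using True ap by (simp add: field_simps)
    then have "a * a \<le> A * B" using ap by (simp add: field_simps)
    then show False using c by (simp add: power2_eq_square)
  next
    case False
    then have A0: "A = 0" using assms by simp
    have tp: "B/a + 1 > 0" using ap assms(3) by (simp add: add_nonneg_pos)
    have "2 * a \<le> B / (B/a + 1)" using assms(4)[OF tp] A0 by simp
    also have "B / (B/a + 1) = a * B / (B + a)" using ap by (simp add: field_simps)
    also have "\<dots> < a" using ap assms(3) by (simp add: divide_less_eq algebra_simps add_nonneg_pos)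
    finally show False using ap by simp
  qed
qed

lemma sq_le_mult_if_quadratic_nonneg:
  fixes a c d :: real
  assumes "a \<ge> 0" "d \<ge> 0" "\<And>s. 0 \<le> a + 2 * s * c + s\<^sup>2 * d"
  shows "c\<^sup>2 \<le> a * d"
proof (cases "d > 0")
  case True
  have "0 \<le> a + 2 * (-c/d) * c + (-c/d)\<^sup>2 * d" by (rule assms(3))
  also have "\<dots> = a - c\<^sup>2 / d" using True by (simp add: power2_eq_square field_simps)
  finally show ?thesis using True by (simp add: divide_le_eq mult.commute)
next
  case False
  then have d0: "d = 0" using assms(2) by simp
  have "c = 0"
  proof (rule ccontr)
    assume c: "c \<noteq> 0"
    have "0 \<le> a + 2 * (-(a+1)/(2*c)) * c + (-(a+1)/(2*c))\<^sup>2 * d" by (rule assms(3))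
    also have "\<dots> = -1" using c d0 by (simp add: field_simps)
    finally show False by simp
  qed
  then show ?thesis using assms by simp
qed

lemma sq_add_le_Cauchy_Schwarz_step:
  fixes \<alpha> \<beta> bb L E :: real
  assumes "\<alpha> \<ge> 0" "\<beta> \<ge> 0" "bb > 0" "L \<ge> 0" "E \<ge> 0" "\<beta>\<^sup>2 \<le> L * E"
  shows "(\<alpha> + \<beta>)\<^sup>2 \<le> (1 / bb + L) * (bb * \<alpha>\<^sup>2 + E)"
proof -
  have key: "2 * \<alpha> * \<beta> \<le> E / bb + L * bb * \<alpha>\<^sup>2"
  proof (cases "L > 0")
    case True
    have t: "L * bb > 0" using True assms by simp
    have "2 * \<alpha> * \<beta> \<le> (L * bb) * \<alpha>\<^sup>2 + \<beta>\<^sup>2 / (L * bb)" by (rule two_mult_le_weighted_squares[OF t])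
    also have "\<beta>\<^sup>2 / (L * bb) \<le> (L * E) / (L * bb)" by (rule divide_right_mono[OF assms(6)]) (use t in simp)
    also have "(L * E) / (L * bb) = E / bb" using True by simp
    finally show ?thesis by (simp add: algebra_simps)
  next
    case False
    then have "L = 0" using assms by simp
    then have "\<beta> = 0" using assms(6) by simp
    then show ?thesis using assms by simp
  qed
  have "(1 / bb + L) * (bb * \<alpha>\<^sup>2 + E) = \<alpha>\<^sup>2 + E / bb + L * bb * \<alpha>\<^sup>2 + L * E"
    using assms(3) by (simp add: field_simps)
  moreover have "(\<alpha> + \<beta>)\<^sup>2 = \<alpha>\<^sup>2 + 2 * \<alpha> * \<beta> + \<beta>\<^sup>2" by (simp add: power2_eq_square algebra_simps)
  ultimately show ?thesis using key assms(6) by linarith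
qed

lemma le_mult_if_le_add_eps_mult:
  fixes a r e :: real
  assumes "e \<ge> 0" "\<And>\<epsilon>. \<epsilon> > 0 \<Longrightarrow> a \<le> (r + \<epsilon>) * e"
  shows "a \<le> r * e"
proof (rule field_le_epsilon)
  fix \<epsilon> :: real assume ep: "\<epsilon> > 0"
  have p: "\<epsilon> / (e + 1) > 0" using ep assms(1) by simp
  have "a \<le> (r + \<epsilon> / (e + 1)) * e" by (rule assms(2)[OF p])
  also have "\<dots> = r * e + \<epsilon> * (e / (e + 1))" by (simp add: algebra_simps)
  also have "\<epsilon> * (e / (e + 1)) \<le> \<epsilon> * 1" using ep assms(1) by (intro mult_left_mono) auto
  finally show "a \<le> r * e + \<epsilon>" by simp
qed

lemma mult_le_sum_squares: "(a::real) * c \<le> a\<^sup>2 + c\<^sup>2"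
proof -
  have "2 * (a * c) \<le> a\<^sup>2 + c\<^sup>2"
    using sum_squares_ge_zero[of "a - c" 0] by (simp add: power2_eq_square algebra_simps)
  moreover have "0 \<le> a\<^sup>2 + c\<^sup>2" by simp
  ultimately show ?thesis by linarith
qed

lemma norm_add_sq_le: "(norm (a + c))\<^sup>2 \<le> 2 * (norm a)\<^sup>2 + 2 * (norm (c :: 'a :: real_normed_vector))\<^sup>2"
proof -
  have "(norm (a + c))\<^sup>2 \<le> (norm a + norm c)\<^sup>2" by (simp add: power_mono norm_triangle_ineq)
  also have "\<dots> \<le> 2 * (norm a)\<^sup>2 + 2 * (norm c)\<^sup>2"
    using sum_squares_ge_zero[of "norm a - norm c" 0] by (simp add: power2_eq_square algebra_simps)
  finally show ?thesis .
qed

lemma infsum_Cauchy_Schwarz: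
  fixes p q :: "'a \<Rightarrow> real"
  assumes p: "\<And>x. p x \<ge> 0" "(\<lambda>x. (p x)\<^sup>2) summable_on A"
    and q: "\<And>x. q x \<ge> 0" "(\<lambda>x. (q x)\<^sup>2) summable_on A"
  shows "(\<lambda>x. p x * q x) summable_on A"
    and "(\<Sum>\<^sub>\<infinity>x\<in>A. p x * q x)\<^sup>2 \<le> (\<Sum>\<^sub>\<infinity>x\<in>A. (p x)\<^sup>2) * (\<Sum>\<^sub>\<infinity>x\<in>A. (q x)\<^sup>2)"
proof -
  have bd: "2 * (p x * q x) \<le> t * (p x)\<^sup>2 + (q x)\<^sup>2 / t" if "t > 0" for t x
    using two_mult_le_weighted_squares[OF that] by (simp add: mult.assoc)
  have "(\<lambda>x. 1 * (p x)\<^sup>2 + (q x)\<^sup>2 / 1) summable_on A"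
    using summable_on_add[OF p(2) q(2)] by simp
  then have "(\<lambda>x. 2 * (p x * q x)) summable_on A"
    by (rule summable_on_comparison_test) (use bd[of 1] p q in auto)
  then show S: "(\<lambda>x. p x * q x) summable_on A"
    using summable_on_cmult_right'[of 2] by (metis zero_neq_numeral)
  show "(\<Sum>\<^sub>\<infinity>x\<in>A. p x * q x)\<^sup>2 \<le> (\<Sum>\<^sub>\<infinity>x\<in>A. (p x)\<^sup>2) * (\<Sum>\<^sub>\<infinity>x\<in>A. (q x)\<^sup>2)"
  proof (rule sq_le_mult_if_amgm_bound)
    show "(\<Sum>\<^sub>\<infinity>x\<in>A. p x * q x) \<ge> 0" "(\<Sum>\<^sub>\<infinity>x\<in>A. (p x)\<^sup>2) \<ge> 0" "(\<Sum>\<^sub>\<infinity>x\<in>A. (q x)\<^sup>2) \<ge> 0"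
      using p q by (auto intro!: infsum_nonneg)
    fix t :: real assume t: "t > 0"
    have "2 * (\<Sum>\<^sub>\<infinity>x\<in>A. p x * q x) = (\<Sum>\<^sub>\<infinity>x\<in>A. 2 * (p x * q x))"
      by (simp add: infsum_cmult_right')
    also have "\<dots> \<le> (\<Sum>\<^sub>\<infinity>x\<in>A. t * (p x)\<^sup>2 + (q x)\<^sup>2 / t)"
      using bd[OF t] S p q
      by (intro infsum_mono) (auto intro!: summable_on_add summable_on_cmult_right summable_on_cmult_left
          simp: divide_inverse)
    also have "\<dots> = t * (\<Sum>\<^sub>\<infinity>x\<in>A. (p x)\<^sup>2) + (\<Sum>\<^sub>\<infinity>x\<in>A. (q x)\<^sup>2) / t"
      using p q by (subst infsum_add) (auto intro!: summable_on_cmult_right summable_on_cmult_left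
          simp: divide_inverse infsum_cmult_right' infsum_cmult_left')
    finally show "2 * (\<Sum>\<^sub>\<infinity>x\<in>A. p x * q x) \<le> t * (\<Sum>\<^sub>\<infinity>x\<in>A. (p x)\<^sup>2) + (\<Sum>\<^sub>\<infinity>x\<in>A. (q x)\<^sup>2) / t" .
  qed
qed

lemma weighted_infsum_Cauchy_Schwarz:
  fixes w u :: "'a \<Rightarrow> real"
  assumes w: "\<And>y. w y \<ge> 0" "w summable_on UNIV" and u: "\<And>y. u y \<ge> 0"
    and wu: "(\<lambda>y. w y * (u y)\<^sup>2) summable_on UNIV"
  shows "(\<lambda>y. w y * u y) summable_on UNIV"
    and "(\<Sum>\<^sub>\<infinity>y. w y * u y)\<^sup>2 \<le> (\<Sum>\<^sub>\<infinity>y. w y) * (\<Sum>\<^sub>\<infinity>y. w y * (u y)\<^sup>2)"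
proof -
  have p: "(sqrt (w y))\<^sup>2 = w y" and q: "(sqrt (w y) * u y)\<^sup>2 = w y * (u y)\<^sup>2"
    and pq: "sqrt (w y) * (sqrt (w y) * u y) = w y * u y" for y
    using w(1)[of y] by (simp_all add: power_mult_distrib flip: mult.assoc)
  note CS = infsum_Cauchy_Schwarz[of "\<lambda>y. sqrt (w y)" UNIV "\<lambda>y. sqrt (w y) * u y", unfolded p q pq]
  show "(\<lambda>y. w y * u y) summable_on UNIV"
    and "(\<Sum>\<^sub>\<infinity>y. w y * u y)\<^sup>2 \<le> (\<Sum>\<^sub>\<infinity>y. w y) * (\<Sum>\<^sub>\<infinity>y. w y * (u y)\<^sup>2)"
    using CS w u wu by auto
qed

lemma infsum_of_real:
  "h summable_on A \<Longrightarrow> (\<Sum>\<^sub>\<infinity>x\<in>A. complex_of_real (h x)) = of_real (\<Sum>\<^sub>\<infinity>x\<in>A. h x)"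
  by (intro infsumI has_sum_of_real has_sum_infsum)

lemma infsum_single_point: "(\<Sum>\<^sub>\<infinity>y. if y = x then (c::'c::{comm_monoid_add,t2_space}) else 0) = c"
proof -
  have "(\<Sum>\<^sub>\<infinity>y. if y = x then c else 0) = (\<Sum>\<^sub>\<infinity>y\<in>{x}. if y = x then c else 0)"
    by (rule infsum_cong_neutral) auto
  then show ?thesis by simp
qed

lemma has_sum_extend_zero:
  fixes h :: "'a \<Rightarrow> real"
  assumes "h summable_on S"
  shows "((\<lambda>x. if x \<in> S then h x else 0) has_sum (\<Sum>\<^sub>\<infinity>x\<in>S. h x)) UNIV"
proof -
  have "((\<lambda>x. if x \<in> S then h x else 0) has_sum (\<Sum>\<^sub>\<infinity>x\<in>S. h x)) UNIV \<longleftrightarrow> (h has_sum (\<Sum>\<^sub>\<infinity>x\<in>S. h x)) S"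
    by (rule has_sum_cong_neutral) auto
  then show ?thesis using assms by simp
qed

section \<open>Inradius and paths\<close>

lemma inradius_nonneg: "real_of_ereal (inradius b \<Omega>) \<ge> 0"
proof (cases "{ereal r | r. r > 0 \<and> (\<exists>x\<in>\<Omega>. gball b x r \<subseteq> \<Omega>)} = {}")
  case True
  have "inradius b \<Omega> = Sup {}" unfolding inradius_def True ..
  then show ?thesis by (simp add: bot_ereal_def)
next
  case False
  then obtain r where r: "r > 0" "ereal r \<in> {ereal r | r. r > 0 \<and> (\<exists>x\<in>\<Omega>. gball b x r \<subseteq> \<Omega>)}" by blast
  have "ereal r \<le> inradius b \<Omega>" unfolding inradius_def by (rule Sup_upper[OF r(2)])
  then have "0 \<le> inradius b \<Omega>" using r(1) by (metis ereal_less_eq(5) less_imp_le order_trans zero_ereal_def)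
  then show ?thesis by (rule real_of_ereal_pos)
qed

lemma exists_outside_gdist_less:
  assumes x: "x \<in> \<Omega>" and e: "\<epsilon> > 0" and fin: "inradius b \<Omega> < \<infinity>"
  shows "\<exists>y. y \<notin> \<Omega> \<and> gdist b x y < real_of_ereal (inradius b \<Omega>) + \<epsilon>"
proof (rule ccontr)
  define R where "R = real_of_ereal (inradius b \<Omega>)"
  assume "\<not> ?thesis"
  then have "gball b x (R + \<epsilon>) \<subseteq> \<Omega>" by (auto simp: gball_def R_def)
  moreover have "R + \<epsilon> > 0" using inradius_nonneg[of b \<Omega>] e by (simp add: R_def)
  ultimately have "ereal (R + \<epsilon>) \<in> {ereal r | r. r > 0 \<and> (\<exists>x\<in>\<Omega>. gball b x r \<subseteq> \<Omega>)}" using x by blast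
  then have le: "ereal (R + \<epsilon>) \<le> inradius b \<Omega>" unfolding inradius_def by (rule Sup_upper)
  then have "inradius b \<Omega> \<noteq> - \<infinity>" by auto
  then have "inradius b \<Omega> = ereal R" using fin by (cases "inradius b \<Omega>") (auto simp: R_def)
  then show False using le e by simp
qed

lemma exists_path_length_less:
  assumes conn: "graph_connected b" and "gdist b x y < a"
  shows "\<exists>p. is_path b p x y \<and> path_length b p < a"
proof -
  have ne: "{path_length b p | p. is_path b p x y} \<noteq> {}" using conn by (auto simp: graph_connected_def)
  from cInf_lessD[OF ne] assms(2) show ?thesis unfolding gdist_def by blast
qed

lemma hd_append_Cons: "hd (xs @ a # ys) = hd (xs @ [a])" by (cases xs) auto

fun edges :: "'a list \<Rightarrow> ('a \<times> 'a) list" where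
  "edges (u # v # r) = (u, v) # edges (v # r)" | "edges _ = []"

lemma edges_set: "(u, v) \<in> set (edges p) \<Longrightarrow> u \<in> set p \<and> v \<in> set p"
  by (induction p rule: edges.induct) auto

lemma edges_distinct: "distinct p \<Longrightarrow> distinct (edges p)"
  by (induction p rule: edges.induct) (auto dest: edges_set)

lemma edges_antisym: "distinct p \<Longrightarrow> (u, v) \<in> set (edges p) \<Longrightarrow> (v, u) \<notin> set (edges p)"
  by (induction p rule: edges.induct) (auto dest: edges_set)

section \<open>The weighted space \<open>\<ell>\<^sup>2(X,m)\<close>\<close>

locale positive_weight =
  fixes m :: "'a \<Rightarrow> real"
  assumes weight_pos: "m x > 0"
begin

lemma weight_nonneg [simp]: "m x \<ge> 0"
  using weight_pos less_imp_le by blast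

definition l2dens :: "('a \<Rightarrow> complex) \<Rightarrow> 'a \<Rightarrow> real" where
  "l2dens f x = (cmod (f x))\<^sup>2 * m x"

lemma l2dens_nonneg: "l2dens f x \<ge> 0" unfolding l2dens_def using weight_pos[of x] by simp

lemma ell2_iff: "f \<in> ell2 m A \<longleftrightarrow> (\<forall>x. x \<notin> A \<longrightarrow> f x = 0) \<and> l2dens f summable_on UNIV"
  unfolding ell2_def l2dens_def by (simp add: fun_eq_iff)

lemma ell2_summable: "f \<in> ell2 m A \<Longrightarrow> l2dens f summable_on UNIV" by (simp add: ell2_iff)
lemma ell2_UNIV: "f \<in> ell2 m A \<Longrightarrow> f \<in> ell2 m UNIV" by (simp add: ell2_iff)

lemma l2norm_eq_sqrt: "l2norm m f = sqrt (\<Sum>\<^sub>\<infinity>x. l2dens f x)" unfolding l2norm_def l2dens_def ..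

lemma l2norm_power2: "(l2norm m f)\<^sup>2 = (\<Sum>\<^sub>\<infinity>x. l2dens f x)"
  unfolding l2norm_eq_sqrt by (rule real_sqrt_pow2) (intro infsum_nonneg l2dens_nonneg)

lemma l2norm_nonneg: "l2norm m f \<ge> 0"
  unfolding l2norm_eq_sqrt by (intro real_sqrt_ge_zero infsum_nonneg l2dens_nonneg)

lemma l2_abs_product:
  assumes f: "f \<in> ell2 m UNIV" and g: "g \<in> ell2 m UNIV"
  shows "(\<lambda>x. cmod (f x) * cmod (g x) * m x) summable_on UNIV"
    and "(\<Sum>\<^sub>\<infinity>x. cmod (f x) * cmod (g x) * m x) \<le> l2norm m f * l2norm m g"
proof -
  have sq: "(cmod (h x) * sqrt (m x))\<^sup>2 = l2dens h x" for h x
    by (simp add: l2dens_def power_mult_distrib)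
  have pq: "cmod (f x) * sqrt (m x) * (cmod (g x) * sqrt (m x)) = cmod (f x) * cmod (g x) * m x" for x
    by (simp add: algebra_simps)
  have s: "(\<lambda>x. (cmod (h x) * sqrt (m x))\<^sup>2) summable_on UNIV" if "h \<in> ell2 m UNIV" for h
    unfolding sq using ell2_summable[OF that] .
  note CS = infsum_Cauchy_Schwarz[OF _ s[OF f] _ s[OF g], unfolded sq pq]
  show "(\<lambda>x. cmod (f x) * cmod (g x) * m x) summable_on UNIV"
    using CS(1) by simp
  have "(\<Sum>\<^sub>\<infinity>x. cmod (f x) * cmod (g x) * m x)\<^sup>2 \<le> (l2norm m f * l2norm m g)\<^sup>2"
    using CS(2) by (simp add: l2norm_power2 power_mult_distrib)
  then show "(\<Sum>\<^sub>\<infinity>x. cmod (f x) * cmod (g x) * m x) \<le> l2norm m f * l2norm m g"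
    using l2norm_nonneg by (meson mult_nonneg_nonneg power2_le_imp_le)
qed

lemma ell2_add: "f \<in> ell2 m A \<Longrightarrow> g \<in> ell2 m A \<Longrightarrow> (\<lambda>x. f x + g x) \<in> ell2 m A"
proof -
  assume f: "f \<in> ell2 m A" and g: "g \<in> ell2 m A"
  have "(\<lambda>x. 2 * l2dens f x + 2 * l2dens g x) summable_on UNIV"
    using f g by (intro summable_on_add summable_on_cmult_right ell2_summable)
  moreover have "l2dens (\<lambda>x. f x + g x) x \<le> 2 * l2dens f x + 2 * l2dens g x" for x
    using mult_right_mono[OF norm_add_sq_le[of "f x" "g x"] weight_nonneg[of x]] by (simp add: l2dens_def algebra_simps)
  ultimately have "l2dens (\<lambda>x. f x + g x) summable_on UNIV"
    by (rule summable_on_comparison_test) (auto simp: l2dens_nonneg)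
  then show ?thesis using f g by (simp add: ell2_iff)
qed

lemma ell2_scale: "f \<in> ell2 m A \<Longrightarrow> (\<lambda>x. c * f x) \<in> ell2 m A"
proof -
  assume f: "f \<in> ell2 m A"
  have "(\<lambda>x. (cmod c)\<^sup>2 * l2dens f x) summable_on UNIV"
    using f by (intro summable_on_cmult_right ell2_summable)
  moreover have "l2dens (\<lambda>x. c * f x) = (\<lambda>x. (cmod c)\<^sup>2 * l2dens f x)"
    by (auto simp: l2dens_def norm_mult power_mult_distrib)
  ultimately show ?thesis using f by (simp add: ell2_iff)
qed

lemma ell2_diff: "f \<in> ell2 m A \<Longrightarrow> g \<in> ell2 m A \<Longrightarrow> (\<lambda>x. f x - g x) \<in> ell2 m A"
  using ell2_add[of f A "\<lambda>x. (-1) * g x"] ell2_scale[of g A "-1"] by simp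

lemma ell2_zero_fun: "(\<lambda>x. 0) \<in> ell2 m A" by (simp add: ell2_iff l2dens_def[abs_def])

lemma l2inner_summable: "f \<in> ell2 m UNIV \<Longrightarrow> g \<in> ell2 m UNIV \<Longrightarrow>
   (\<lambda>x. f x * cnj (g x) * complex_of_real (m x)) summable_on UNIV"
  unfolding summable_on_iff_abs_summable_on_complex
  using l2_abs_product(1)[of f g] by (simp add: norm_mult)

lemma l2inner_Cauchy_Schwarz: "f \<in> ell2 m UNIV \<Longrightarrow> g \<in> ell2 m UNIV \<Longrightarrow>
   cmod (l2inner m f g) \<le> l2norm m f * l2norm m g"
proof -
  assume f: "f \<in> ell2 m UNIV" and g: "g \<in> ell2 m UNIV"
  have "cmod (l2inner m f g) \<le> (\<Sum>\<^sub>\<infinity>x. cmod (f x * cnj (g x) * complex_of_real (m x)))"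
    unfolding l2inner_def using l2inner_summable[OF f g]
    by (intro norm_infsum_bound) (simp add: summable_on_iff_abs_summable_on_complex[symmetric])
  also have "\<dots> = (\<Sum>\<^sub>\<infinity>x. cmod (f x) * cmod (g x) * m x)" by (simp add: norm_mult)
  also have "\<dots> \<le> l2norm m f * l2norm m g" using l2_abs_product(2)[OF f g] .
  finally show ?thesis .
qed

lemma l2inner_add_left: "f \<in> ell2 m UNIV \<Longrightarrow> g \<in> ell2 m UNIV \<Longrightarrow> h \<in> ell2 m UNIV \<Longrightarrow>
   l2inner m (\<lambda>x. f x + g x) h = l2inner m f h + l2inner m g h"
proof -
  assume f: "f \<in> ell2 m UNIV" and g: "g \<in> ell2 m UNIV" and h: "h \<in> ell2 m UNIV"
  have e: "(\<lambda>x. (f x + g x) * cnj (h x) * complex_of_real (m x)) = (\<lambda>x. f x * cnj (h x) * complex_of_real (m x) + g x * cnj (h x) * complex_of_real (m x))"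
    by (simp add: algebra_simps)
  show ?thesis unfolding l2inner_def e by (rule infsum_add) (use l2inner_summable f g h in auto)
qed

lemma l2inner_scale_left: "l2inner m (\<lambda>x. c * f x) g = c * l2inner m f g"
  unfolding l2inner_def by (subst infsum_cmult_right'[symmetric]) (simp add: algebra_simps)

lemma l2inner_cnj: "l2inner m g f = cnj (l2inner m f g)"
  unfolding l2inner_def by (subst infsum_cnj[symmetric]) (simp add: algebra_simps del: infsum_cnj)

lemma l2inner_diff_left: "f \<in> ell2 m UNIV \<Longrightarrow> g \<in> ell2 m UNIV \<Longrightarrow> h \<in> ell2 m UNIV \<Longrightarrow>
   l2inner m (\<lambda>x. f x - g x) h = l2inner m f h - l2inner m g h"
  using l2inner_add_left[of f "\<lambda>x. (-1) * g x" h] l2inner_scale_left[of "-1" g h] ell2_scale[of g UNIV "-1"] by simp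

lemma l2inner_add_right: "f \<in> ell2 m UNIV \<Longrightarrow> g \<in> ell2 m UNIV \<Longrightarrow> h \<in> ell2 m UNIV \<Longrightarrow>
   l2inner m h (\<lambda>x. f x + g x) = l2inner m h f + l2inner m h g"
  by (subst (1 2 3) l2inner_cnj) (simp add: l2inner_add_left)

lemma l2inner_scale_right: "l2inner m g (\<lambda>x. c * f x) = cnj c * l2inner m g f"
  by (subst (1 2) l2inner_cnj) (simp add: l2inner_scale_left)

lemma l2inner_self: "f \<in> ell2 m UNIV \<Longrightarrow> l2inner m f f = complex_of_real ((l2norm m f)\<^sup>2)"
proof -
  assume f: "f \<in> ell2 m UNIV"
  have "l2inner m f f = (\<Sum>\<^sub>\<infinity>x. complex_of_real (l2dens f x))"
    unfolding l2inner_def l2dens_def by (simp only: of_real_mult complex_norm_square)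
  also have "\<dots> = complex_of_real (\<Sum>\<^sub>\<infinity>x. l2dens f x)" using f ell2_summable infsum_of_real by blast
  finally show ?thesis by (simp add: l2norm_power2)
qed

lemma l2norm_triangle: "f \<in> ell2 m UNIV \<Longrightarrow> g \<in> ell2 m UNIV \<Longrightarrow>
  l2norm m (\<lambda>x. f x + g x) \<le> l2norm m f + l2norm m g"
proof -
  assume f: "f \<in> ell2 m UNIV" and g: "g \<in> ell2 m UNIV"
  have pw: "l2dens (\<lambda>x. f x + g x) x \<le> l2dens f x + 2 * (cmod (f x) * cmod (g x) * m x) + l2dens g x" for x
  proof -
    have "(cmod (f x + g x))\<^sup>2 \<le> (cmod (f x) + cmod (g x))\<^sup>2"
      by (simp add: power_mono norm_triangle_ineq)
    then have "(cmod (f x + g x))\<^sup>2 * m x \<le> (cmod (f x) + cmod (g x))\<^sup>2 * m x"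
      by (simp add: mult_right_mono)
    then show ?thesis by (simp add: l2dens_def power2_eq_square algebra_simps)
  qed
  have S: "(\<lambda>x. cmod (f x) * cmod (g x) * m x) summable_on UNIV" using l2_abs_product(1)[OF f g] .
  have "(l2norm m (\<lambda>x. f x + g x))\<^sup>2 = (\<Sum>\<^sub>\<infinity>x. l2dens (\<lambda>x. f x + g x) x)" by (rule l2norm_power2)
  also have "\<dots> \<le> (\<Sum>\<^sub>\<infinity>x. l2dens f x + 2 * (cmod (f x) * cmod (g x) * m x) + l2dens g x)"
    using pw ell2_summable[OF ell2_add[OF f g]] ell2_summable[OF f] ell2_summable[OF g] S
    by (intro infsum_mono) (auto intro!: summable_on_add summable_on_cmult_right)
  also have "\<dots> = (\<Sum>\<^sub>\<infinity>x. l2dens f x) + 2 * (\<Sum>\<^sub>\<infinity>x. cmod (f x) * cmod (g x) * m x) + (\<Sum>\<^sub>\<infinity>x. l2dens g x)"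
    using ell2_summable[OF f] ell2_summable[OF g] S
    by (simp add: infsum_add summable_on_add summable_on_cmult_right infsum_cmult_right')
  also have "\<dots> \<le> (l2norm m f)\<^sup>2 + 2 * (l2norm m f * l2norm m g) + (l2norm m g)\<^sup>2"
    using l2_abs_product(2)[OF f g] by (simp add: l2norm_power2)
  also have "\<dots> = (l2norm m f + l2norm m g)\<^sup>2" by (simp add: power2_eq_square algebra_simps)
  finally show ?thesis using l2norm_nonneg by (meson add_nonneg_nonneg power2_le_imp_le)
qed

lemma l2norm_scale: "l2norm m (\<lambda>x. c * f x) = cmod c * l2norm m f"
proof -
  have "l2dens (\<lambda>x. c * f x) = (\<lambda>x. (cmod c)\<^sup>2 * l2dens f x)"
    by (auto simp: l2dens_def norm_mult power_mult_distrib)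
  then show ?thesis unfolding l2norm_eq_sqrt by (simp add: infsum_cmult_right' real_sqrt_mult)
qed

lemma l2norm_minus_commute: "l2norm m (\<lambda>x. f x - g x) = l2norm m (\<lambda>x. g x - f x)"
  unfolding l2norm_def by (simp add: norm_minus_commute)

lemma l2norm_diff_le: "f \<in> ell2 m UNIV \<Longrightarrow> g \<in> ell2 m UNIV \<Longrightarrow>
  l2norm m (\<lambda>x. f x - g x) \<le> l2norm m f + l2norm m g"
  using l2norm_triangle[of f "\<lambda>x. (-1) * g x"] ell2_scale[of g UNIV "-1"] l2norm_scale[of "-1" g] by simp

lemma l2norm_eq_0_iff: "f \<in> ell2 m A \<Longrightarrow> l2norm m f = 0 \<longleftrightarrow> f = (\<lambda>x. 0)"
proof
  assume f: "f \<in> ell2 m A" and z: "l2norm m f = 0"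
  have "(\<Sum>\<^sub>\<infinity>x. l2dens f x) \<le> 0" using z l2norm_power2[of f] by simp
  then have "l2dens f x = 0" for x
    using nonneg_infsum_le_0D[of "l2dens f" UNIV x] ell2_summable[OF f] l2dens_nonneg by simp
  then have "f x = 0" for x using weight_pos[of x] unfolding l2dens_def by (metis less_irrefl mult_eq_0_iff zero_eq_power2 norm_eq_zero)
  then show "f = (\<lambda>x. 0)" by auto
next
  assume "f = (\<lambda>x. 0)" then show "l2norm m f = 0" by (simp add: l2norm_def)
qed

definition l2dist where "l2dist f g = l2norm m (\<lambda>x. f x - g x)"

lemma l2dens_le_l2norm: "f \<in> ell2 m A \<Longrightarrow> l2dens f x \<le> (l2norm m f)\<^sup>2"
proof -
  assume f: "f \<in> ell2 m A"
  have "sum (l2dens f) {x} \<le> (\<Sum>\<^sub>\<infinity>x. l2dens f x)"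
    by (rule finite_sum_le_infsum) (use ell2_summable[OF f] l2dens_nonneg in auto)
  then show ?thesis by (simp add: l2norm_power2)
qed

lemma Metric_space_ell2: "Metric_space (ell2 m A) l2dist"
proof
  fix f g h
  show "0 \<le> l2dist f g" by (simp add: l2dist_def l2norm_nonneg)
  show "l2dist f g = l2dist g f" unfolding l2dist_def by (rule l2norm_minus_commute)
  assume f: "f \<in> ell2 m A" and g: "g \<in> ell2 m A"
  show "(l2dist f g = 0) = (f = g)"
    unfolding l2dist_def by (subst l2norm_eq_0_iff[OF ell2_diff[OF f g]]) (auto simp: fun_eq_iff)
  assume h: "h \<in> ell2 m A"
  have "l2dist f h = l2norm m (\<lambda>x. (f x - g x) + (g x - h x))" by (simp add: l2dist_def)
  also have "\<dots> \<le> l2dist f g + l2dist g h" unfolding l2dist_def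
    by (rule l2norm_triangle[OF ell2_UNIV[OF ell2_diff[OF f g]] ell2_UNIV[OF ell2_diff[OF g h]]])
  finally show "l2dist f h \<le> l2dist f g + l2dist g h" .
qed

lemma cmod_sqrt_weight_le_l2norm:
  assumes "f \<in> ell2 m A"
  shows "cmod (f x) * sqrt (m x) \<le> l2norm m f"
proof -
  have "(cmod (f x) * sqrt (m x))\<^sup>2 = l2dens f x" by (simp add: l2dens_def power_mult_distrib)
  then have "(cmod (f x) * sqrt (m x))\<^sup>2 \<le> (l2norm m f)\<^sup>2" using l2dens_le_l2norm[OF assms] by simp
  then show ?thesis using l2norm_nonneg by (rule power2_le_imp_le)
qed

lemma l2norm_normalize:
  assumes "f \<in> ell2 m A" and "l2norm m f \<noteq> 0"
  shows "(\<lambda>x. complex_of_real (1 / l2norm m f) * f x) \<in> ell2 m A"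
    and "l2norm m (\<lambda>x. complex_of_real (1 / l2norm m f) * f x) = 1"
proof -
  show "(\<lambda>x. complex_of_real (1 / l2norm m f) * f x) \<in> ell2 m A" by (rule ell2_scale[OF assms(1)])
  have "l2norm m f > 0" using assms(2) l2norm_nonneg[of f] by linarith
  then show "l2norm m (\<lambda>x. complex_of_real (1 / l2norm m f) * f x) = 1"
    unfolding l2norm_scale norm_of_real by simp
qed

text \<open>Fatou's lemma for the \<open>\<ell>\<^sup>2\<close> norm under pointwise convergence.\<close>

lemma l2dist_le_if_pointwise_limit:
  assumes f: "f \<in> ell2 m A" and \<sigma>: "\<And>k. \<sigma> k \<in> ell2 m A"
    and lim: "\<And>x. (\<lambda>k. \<sigma> k x) \<longlonglongrightarrow> l x" and near: "\<And>k. k \<ge> N \<Longrightarrow> l2dist f (\<sigma> k) \<le> \<epsilon>"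
  shows "l2dens (\<lambda>x. f x - l x) summable_on UNIV" and "l2dist f l \<le> \<epsilon>"
proof -
  have fs: "sum (l2dens (\<lambda>x. f x - l x)) F \<le> \<epsilon>\<^sup>2" if F: "finite F" for F
  proof -
    have t: "(\<lambda>k. sum (l2dens (\<lambda>x. f x - \<sigma> k x)) F) \<longlonglongrightarrow> sum (l2dens (\<lambda>x. f x - l x)) F"
      unfolding l2dens_def by (intro tendsto_intros lim)
    show ?thesis
    proof (rule LIMSEQ_le_const2[OF t], intro exI allI impI)
      fix k assume k: "N \<le> k"
      have "sum (l2dens (\<lambda>x. f x - \<sigma> k x)) F \<le> (\<Sum>\<^sub>\<infinity>x. l2dens (\<lambda>x. f x - \<sigma> k x) x)"
        using finite_sum_le_infsum[OF ell2_summable[OF ell2_diff[OF f \<sigma>]] F subset_UNIV] l2dens_nonneg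
        by blast
      also have "\<dots> = (l2dist f (\<sigma> k))\<^sup>2" by (simp add: l2dist_def l2norm_power2)
      also have "\<dots> \<le> \<epsilon>\<^sup>2" using near[OF k] by (intro power_mono) (auto simp: l2dist_def l2norm_nonneg)
      finally show "sum (l2dens (\<lambda>x. f x - \<sigma> k x)) F \<le> \<epsilon>\<^sup>2" .
    qed
  qed
  show S: "l2dens (\<lambda>x. f x - l x) summable_on UNIV"
  proof (rule nonneg_bdd_above_summable_on)
    show "bdd_above (sum (l2dens (\<lambda>x. f x - l x)) ` {F. F \<subseteq> UNIV \<and> finite F})"
      using fs by (intro bdd_aboveI[of _ "\<epsilon>\<^sup>2"]) blast
  qed (rule l2dens_nonneg)
  have "(l2dist f l)\<^sup>2 \<le> \<epsilon>\<^sup>2" unfolding l2dist_def l2norm_power2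
    by (rule infsum_le_finite_sums[OF S]) (use fs in auto)
  moreover have "\<epsilon> \<ge> 0" using near[of N] l2norm_nonneg[of "\<lambda>x. f x - \<sigma> N x"] by (simp add: l2dist_def)
  ultimately show "l2dist f l \<le> \<epsilon>" by (rule power2_le_imp_le)
qed

lemma l2dist_tail_le_if_pointwise_limit:
  assumes \<sigma>: "\<And>n. \<sigma> n \<in> ell2 m A"
    and C: "\<And>\<epsilon>. \<epsilon> > 0 \<Longrightarrow> \<exists>N. \<forall>n n'. N \<le> n \<longrightarrow> N \<le> n' \<longrightarrow> l2dist (\<sigma> n) (\<sigma> n') < \<epsilon>"
    and lim: "\<And>x. (\<lambda>n. \<sigma> n x) \<longlonglongrightarrow> l x" and eps: "\<epsilon> > 0"
  shows "\<exists>N. \<forall>n\<ge>N. l2dens (\<lambda>x. \<sigma> n x - l x) summable_on UNIV \<and> l2dist (\<sigma> n) l \<le> \<epsilon>"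
proof -
  obtain N where N: "\<forall>n n'. N \<le> n \<longrightarrow> N \<le> n' \<longrightarrow> l2dist (\<sigma> n) (\<sigma> n') < \<epsilon>"
    using C[OF eps] by blast
  have "l2dens (\<lambda>x. \<sigma> n x - l x) summable_on UNIV \<and> l2dist (\<sigma> n) l \<le> \<epsilon>" if "N \<le> n" for n
  proof -
    have "\<And>k. k \<ge> N \<Longrightarrow> l2dist (\<sigma> n) (\<sigma> k) \<le> \<epsilon>" using N that by (simp add: less_imp_le)
    then show ?thesis using l2dist_le_if_pointwise_limit[OF \<sigma> \<sigma> lim] by blast
  qed
  then show ?thesis by blast
qed

lemma Cauchy_pointwise_if_l2dist_Cauchy:
  assumes \<sigma>: "\<And>n. \<sigma> n \<in> ell2 m A"
    and C: "\<And>\<epsilon>. \<epsilon> > 0 \<Longrightarrow> \<exists>N. \<forall>n n'. N \<le> n \<longrightarrow> N \<le> n' \<longrightarrow> l2dist (\<sigma> n) (\<sigma> n') < \<epsilon>"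
  shows "Cauchy (\<lambda>n. \<sigma> n x)"
proof (rule metric_CauchyI)
  fix e :: real assume e: "e > 0"
  obtain N where N: "\<And>n n'. N \<le> n \<Longrightarrow> N \<le> n' \<Longrightarrow> l2dist (\<sigma> n) (\<sigma> n') < e * sqrt (m x)"
    using C[of "e * sqrt (m x)"] e weight_pos[of x] by auto
  have "dist (\<sigma> n x) (\<sigma> n' x) < e" if "N \<le> n" "N \<le> n'" for n n'
  proof -
    have "cmod (\<sigma> n x - \<sigma> n' x) * sqrt (m x) < e * sqrt (m x)"
      using cmod_sqrt_weight_le_l2norm[OF ell2_diff[OF \<sigma> \<sigma>]] N[OF that]
      unfolding l2dist_def by (rule le_less_trans)
    then show ?thesis using weight_pos[of x] by (simp add: dist_norm)
  qed
  then show "\<exists>M. \<forall>n\<ge>M. \<forall>n'\<ge>M. dist (\<sigma> n x) (\<sigma> n' x) < e" by blast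
qed

lemma mcomplete_ell2: "Metric_space.mcomplete (ell2 m A) l2dist"
proof -
  interpret V: Metric_space "ell2 m A" l2dist by (rule Metric_space_ell2)
  have "\<exists>l. limitin V.mtopology \<sigma> l sequentially" if "V.MCauchy \<sigma>" for \<sigma>
  proof -
    from that have \<sigma>: "\<And>n. \<sigma> n \<in> ell2 m A"
      and C: "\<And>\<epsilon>. \<epsilon> > 0 \<Longrightarrow> \<exists>N. \<forall>n n'. N \<le> n \<longrightarrow> N \<le> n' \<longrightarrow> l2dist (\<sigma> n) (\<sigma> n') < \<epsilon>"
      unfolding V.MCauchy_def by blast+
    define l where "l x = lim (\<lambda>n. \<sigma> n x)" for x
    have lim: "(\<lambda>n. \<sigma> n x) \<longlonglongrightarrow> l x" for x
      using Cauchy_pointwise_if_l2dist_Cauchy[OF \<sigma> C] unfolding l_def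
      by (simp add: Cauchy_convergent_iff convergent_LIMSEQ_iff)
    note tail = l2dist_tail_le_if_pointwise_limit[OF \<sigma> C lim]
    obtain N where "l2dens (\<lambda>x. \<sigma> N x - l x) summable_on UNIV" using tail[of 1] by auto
    then have "(\<lambda>x. \<sigma> N x - l x) \<in> ell2 m UNIV" by (simp add: ell2_iff)
    then have "(\<lambda>x. \<sigma> N x - (\<sigma> N x - l x)) \<in> ell2 m UNIV"
      using ell2_diff ell2_UNIV[OF \<sigma>] by blast
    moreover have "l x = 0" if "x \<notin> A" for x
    proof -
      have "(\<lambda>n. \<sigma> n x) = (\<lambda>n. 0)" using \<sigma> that by (auto simp: ell2_iff)
      then show ?thesis using lim[of x] LIMSEQ_unique by auto
    qed
    ultimately have lV: "l \<in> ell2 m A" by (simp add: ell2_iff)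
    have "limitin V.mtopology \<sigma> l sequentially"
      unfolding V.limitin_metric eventually_sequentially
    proof (intro conjI lV allI impI)
      fix \<epsilon> :: real assume "\<epsilon> > 0"
      then obtain N where N: "\<forall>n\<ge>N. l2dist (\<sigma> n) l \<le> \<epsilon> / 2" using tail[of "\<epsilon> / 2"] by auto
      have "l2dist (\<sigma> n) l < \<epsilon>" if "n \<ge> N" for n
        using N that \<open>\<epsilon> > 0\<close> by fastforce
      then show "\<exists>N. \<forall>n\<ge>N. \<sigma> n \<in> ell2 m A \<and> l2dist (\<sigma> n) l < \<epsilon>"
        using \<sigma> by blast
    qed
    then show ?thesis by blast
  qed
  then show ?thesis unfolding V.mcomplete_def by blast
qed

definition delta :: "'a \<Rightarrow> 'a \<Rightarrow> complex" where "delta x = (\<lambda>y. if y = x then 1 else 0)"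

lemma delta_in_ell2: "x \<in> \<Omega> \<Longrightarrow> delta x \<in> ell2 m \<Omega>"
proof -
  assume x: "x \<in> \<Omega>"
  have "l2dens (delta x) summable_on UNIV"
    by (rule finite_nonzero_values_imp_summable_on) (rule finite_subset[of _ "{x}"], auto simp: l2dens_def delta_def)
  then show ?thesis using x by (auto simp: ell2_iff delta_def)
qed

lemma l2inner_delta: "l2inner m u (delta x) = u x * complex_of_real (m x)"
proof -
  have "l2inner m u (delta x) = (\<Sum>\<^sub>\<infinity>y. if y = x then u x * complex_of_real (m x) else 0)"
    unfolding l2inner_def delta_def by (rule infsum_cong) auto
  then show ?thesis by (simp add: infsum_single_point)
qed

lemma ell2_eqI:
  assumes u: "u \<in> ell2 m \<Omega>" and v: "v \<in> ell2 m \<Omega>" and e: "\<And>g. g \<in> ell2 m \<Omega> \<Longrightarrow> l2inner m u g = l2inner m v g"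
  shows "u = v"
proof
  fix x show "u x = v x"
  proof (cases "x \<in> \<Omega>")
    case True
    have "u x * complex_of_real (m x) = v x * complex_of_real (m x)"
      using e[OF delta_in_ell2[OF True]] by (simp add: l2inner_delta)
    then show ?thesis using weight_pos[of x] by simp
  next
    case False then show ?thesis using u v by (simp add: ell2_iff)
  qed
qed

lemma vol_finite:
  assumes v: "vol m A < \<infinity>"
  shows "m summable_on A" and "vol m A = ennreal (\<Sum>\<^sub>\<infinity>x\<in>A. m x)" and "enn2real (vol m A) = (\<Sum>\<^sub>\<infinity>x\<in>A. m x)"
proof -
  have vs: "vol m A = (SUP F\<in>{F. finite F \<and> F \<subseteq> A}. ennreal (sum m F))"
  proof -
    have "vol m A = (SUP F\<in>{F. finite F \<and> F \<subseteq> A}. sum (\<lambda>x. ennreal (m x)) F)"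
      unfolding vol_def by (rule nonneg_infsum_complete) simp
    also have "\<dots> = (SUP F\<in>{F. finite F \<and> F \<subseteq> A}. ennreal (sum m F))"
      by (rule SUP_cong) (auto intro!: sum_ennreal)
    finally show ?thesis .
  qed
  have fs: "sum m F \<le> enn2real (vol m A)" if "finite F" "F \<subseteq> A" for F
  proof -
    have "ennreal (sum m F) \<le> vol m A" unfolding vs by (rule SUP_upper) (use that in auto)
    then have "enn2real (ennreal (sum m F)) \<le> enn2real (vol m A)" using v by (intro enn2real_mono) auto
    then show ?thesis by (simp add: sum_nonneg)
  qed
  show S: "m summable_on A"
    by (rule nonneg_bdd_above_summable_on) (use fs in \<open>auto intro!: bdd_aboveI[of _ "enn2real (vol m A)"]\<close>)
  have "ennreal (\<Sum>\<^sub>\<infinity>x\<in>A. m x) = (SUP F\<in>{F. finite F \<and> F \<subseteq> A}. ennreal (sum m F))"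
    by (rule infsum_nonneg_is_SUPREMUM_ennreal[OF S]) simp
  then show V: "vol m A = ennreal (\<Sum>\<^sub>\<infinity>x\<in>A. m x)" using vs by simp
  show "enn2real (vol m A) = (\<Sum>\<^sub>\<infinity>x\<in>A. m x)" unfolding V by (simp add: infsum_nonneg)
qed

lemma exists_unit_ell2:
  assumes "\<Omega> \<noteq> {}"
  obtains f where "f \<in> ell2 m \<Omega>" "l2norm m f = 1"
proof -
  obtain x where x: "x \<in> \<Omega>" using assms by blast
  have "delta x \<noteq> (\<lambda>y. 0)" by (auto simp: delta_def fun_eq_iff)
  then have "l2norm m (delta x) \<noteq> 0" using l2norm_eq_0_iff[OF delta_in_ell2[OF x]] by simp
  then show thesis using that l2norm_normalize[OF delta_in_ell2[OF x]] by blast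
qed

lemma cmod_l2inner_le_if_limit:
  assumes l: "l \<in> ell2 m A" and \<sigma>: "\<And>k. \<sigma> k \<in> ell2 m A" and v: "v \<in> ell2 m A"
    and conv: "\<And>\<epsilon>. \<epsilon> > 0 \<Longrightarrow> \<exists>k. l2dist (\<sigma> k) l < \<epsilon>"
    and bound: "\<And>k. cmod (l2inner m (\<sigma> k) v) \<le> B"
  shows "cmod (l2inner m l v) \<le> B"
proof (rule field_le_epsilon)
  fix \<epsilon> :: real assume e: "\<epsilon> > 0"
  have "\<epsilon> / (l2norm m v + 1) > 0" using e l2norm_nonneg by (simp add: add_nonneg_pos)
  then obtain k where k: "l2dist (\<sigma> k) l < \<epsilon> / (l2norm m v + 1)" using conv by blast
  have "l2inner m l v = l2inner m (\<sigma> k) v + l2inner m (\<lambda>x. l x - \<sigma> k x) v"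
    using l2inner_diff_left[OF ell2_UNIV[OF l] ell2_UNIV[OF \<sigma>] ell2_UNIV[OF v]] by simp
  then have "cmod (l2inner m l v) \<le> cmod (l2inner m (\<sigma> k) v) + cmod (l2inner m (\<lambda>x. l x - \<sigma> k x) v)"
    by (simp add: norm_triangle_ineq)
  also have "cmod (l2inner m (\<lambda>x. l x - \<sigma> k x) v) \<le> l2dist (\<sigma> k) l * l2norm m v"
    using l2inner_Cauchy_Schwarz[OF ell2_UNIV[OF ell2_diff[OF l \<sigma>]] ell2_UNIV[OF v]]
    by (simp add: l2dist_def l2norm_minus_commute)
  also have "\<dots> \<le> \<epsilon> / (l2norm m v + 1) * l2norm m v"
    by (rule mult_right_mono[OF less_imp_le[OF k] l2norm_nonneg])
  also have "\<dots> \<le> \<epsilon>" using e l2norm_nonneg[of v] by (simp add: divide_le_eq)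
  finally show "cmod (l2inner m l v) \<le> B + \<epsilon>" using bound[of k] by simp
qed

text \<open>The closedness of these sublevel sets is what makes the inverse of a bijective symmetric
  operator bounded (Hellinger-Toeplitz).\<close>

lemma closedin_sublevel_if_self_adjoint:
  assumes S_in: "\<And>y. y \<in> ell2 m \<Omega> \<Longrightarrow> S y \<in> ell2 m \<Omega>"
    and S_adj: "\<And>y w. y \<in> ell2 m \<Omega> \<Longrightarrow> w \<in> ell2 m \<Omega> \<Longrightarrow> l2inner m (S y) w = l2inner m y (S w)"
  shows "closedin (Metric_space.mtopology (ell2 m \<Omega>) l2dist) {y \<in> ell2 m \<Omega>. l2norm m (S y) \<le> c}"
proof -
  let ?V = "ell2 m \<Omega>"
  interpret M: Metric_space ?V l2dist by (rule Metric_space_ell2)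
  show ?thesis
    unfolding M.metric_closedin_iff_sequentially_closed
  proof (intro conjI allI impI)
    fix \<sigma> l assume a: "range \<sigma> \<subseteq> {y \<in> ?V. l2norm m (S y) \<le> c} \<and> limitin M.mtopology \<sigma> l sequentially"
    then have lV: "l \<in> ?V" and \<sigma>: "\<And>k. \<sigma> k \<in> ?V" and S\<sigma>: "\<And>k. l2norm m (S (\<sigma> k)) \<le> c"
      unfolding M.limitin_metric by auto
    have conv: "\<exists>k. l2dist (\<sigma> k) l < \<epsilon>" if "\<epsilon> > 0" for \<epsilon>
      using a that unfolding M.limitin_metric eventually_sequentially by blast
    define w where "w = S l"
    have wV: "w \<in> ?V" unfolding w_def by (rule S_in[OF lV])
    have "cmod (l2inner m (\<sigma> k) (S w)) \<le> c * l2norm m w" for k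
    proof -
      have "cmod (l2inner m (\<sigma> k) (S w)) = cmod (l2inner m (S (\<sigma> k)) w)" using S_adj[OF \<sigma> wV] by simp
      also have "\<dots> \<le> l2norm m (S (\<sigma> k)) * l2norm m w"
        using l2inner_Cauchy_Schwarz[OF ell2_UNIV[OF S_in[OF \<sigma>]] ell2_UNIV[OF wV]] .
      also have "\<dots> \<le> c * l2norm m w" using S\<sigma> l2norm_nonneg by (simp add: mult_right_mono)
      finally show ?thesis .
    qed
    then have "cmod (l2inner m l (S w)) \<le> c * l2norm m w"
      using cmod_l2inner_le_if_limit[OF lV \<sigma> S_in[OF wV] conv] by blast
    moreover have "cmod (l2inner m l (S w)) = (l2norm m w)\<^sup>2"
      using S_adj[OF lV wV] l2inner_self[OF ell2_UNIV[OF wV]] by (simp add: w_def norm_power)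
    ultimately have "l2norm m w * l2norm m w \<le> c * l2norm m w" by (simp add: power2_eq_square)
    moreover have "c \<ge> 0" using S\<sigma>[of 0] l2norm_nonneg order_trans by blast
    ultimately have "l2norm m w \<le> c"
      using l2norm_nonneg[of w] by (cases "l2norm m w = 0") (auto dest: mult_right_le_imp_le)
    then show "l \<in> {y \<in> ?V. l2norm m (S y) \<le> c}" using lV by (simp add: w_def)
  qed auto
qed

lemma ell2_Baire_ball:
  fixes F :: "nat \<Rightarrow> ('a \<Rightarrow> complex) set"
  assumes closed: "\<And>n. closedin (Metric_space.mtopology (ell2 m \<Omega>) l2dist) (F n)"
    and cover: "(\<Union>n. F n) = ell2 m \<Omega>"
  obtains n y0 r where "r > 0" "y0 \<in> ell2 m \<Omega>" "Metric_space.mball (ell2 m \<Omega>) l2dist y0 r \<subseteq> F n"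
proof -
  interpret M: Metric_space "ell2 m \<Omega>" l2dist by (rule Metric_space_ell2)
  have "\<exists>n. M.mtopology interior_of (F n) \<noteq> {}"
  proof (rule ccontr)
    assume "\<not> ?thesis"
    then have "\<And>T. T \<in> range F \<Longrightarrow> closedin M.mtopology T \<and> M.mtopology interior_of T = {}"
      using closed by blast
    then have "M.mtopology interior_of \<Union> (range F) = {}"
      by (rule M.metric_Baire_category_alt[OF mcomplete_ell2 countable_image[OF countableI_type]])
    then show False using cover ell2_zero_fun[of \<Omega>] interior_of_topspace[of M.mtopology] by auto
  qed
  then obtain n y0 where y0: "y0 \<in> M.mtopology interior_of (F n)" by blast
  moreover have "openin M.mtopology (M.mtopology interior_of (F n))" by simp
  ultimately obtain r where "r > 0" "M.mball y0 r \<subseteq> M.mtopology interior_of (F n)"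
    unfolding M.openin_mtopology by blast
  moreover have "y0 \<in> ell2 m \<Omega>"
    using y0 interior_of_subset_topspace[of M.mtopology "F n"] by auto
  ultimately show thesis using that interior_of_subset[of M.mtopology "F n"] by blast
qed

end

section \<open>Symmetric operators\<close>

locale symmetric_operator = positive_weight m for m :: "'a \<Rightarrow> real" +
  fixes \<Omega> :: "'a set" and T :: "('a \<Rightarrow> complex) \<Rightarrow> 'a \<Rightarrow> complex"
  assumes maps: "f \<in> ell2 m \<Omega> \<Longrightarrow> T f \<in> ell2 m \<Omega>"
    and additive: "f \<in> ell2 m \<Omega> \<Longrightarrow> g \<in> ell2 m \<Omega> \<Longrightarrow> T (\<lambda>x. f x + g x) = (\<lambda>x. T f x + T g x)"
    and real_homogeneous: "f \<in> ell2 m \<Omega> \<Longrightarrow> T (\<lambda>x. complex_of_real c * f x) = (\<lambda>x. complex_of_real c * T f x)"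
    and symmetric: "f \<in> ell2 m \<Omega> \<Longrightarrow> g \<in> ell2 m \<Omega> \<Longrightarrow> l2inner m (T f) g = cnj (l2inner m (T g) f)"
begin

lemma linear_diff: "f \<in> ell2 m \<Omega> \<Longrightarrow> g \<in> ell2 m \<Omega> \<Longrightarrow> T (\<lambda>x. f x - g x) = (\<lambda>x. T f x - T g x)"
  using additive[of f "\<lambda>x. complex_of_real (-1) * g x"] ell2_scale[of g \<Omega> "complex_of_real (-1)"]
    real_homogeneous[of g "-1"] by simp

lemma positive_form_Cauchy_Schwarz:
  assumes pos: "\<And>f. f \<in> ell2 m \<Omega> \<Longrightarrow> Re (l2inner m (T f) f) \<ge> 0"
    and f: "f \<in> ell2 m \<Omega>" and g: "g \<in> ell2 m \<Omega>"
  shows "(Re (l2inner m (T f) g))\<^sup>2 \<le> Re (l2inner m (T f) f) * Re (l2inner m (T g) g)"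
proof (rule sq_le_mult_if_quadratic_nonneg)
  show "Re (l2inner m (T f) f) \<ge> 0" "Re (l2inner m (T g) g) \<ge> 0" using pos f g by auto
  fix s :: real
  define sg where "sg = (\<lambda>x. complex_of_real s * g x)"
  have sgV: "sg \<in> ell2 m \<Omega>" unfolding sg_def by (rule ell2_scale[OF g])
  have hV: "(\<lambda>x. f x + sg x) \<in> ell2 m \<Omega>" by (rule ell2_add[OF f sgV])
  have Th: "T (\<lambda>x. f x + sg x) = (\<lambda>x. T f x + complex_of_real s * T g x)"
    using additive[OF f sgV] real_homogeneous[OF g] by (simp add: sg_def)
  have U: "\<And>h. h \<in> ell2 m \<Omega> \<Longrightarrow> h \<in> ell2 m UNIV" by (rule ell2_UNIV)
  have fU: "f \<in> ell2 m UNIV" and gU: "g \<in> ell2 m UNIV" and sgU: "sg \<in> ell2 m UNIV"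
    and TfU: "T f \<in> ell2 m UNIV" and TgU: "T g \<in> ell2 m UNIV" and sTgU: "(\<lambda>x. complex_of_real s * T g x) \<in> ell2 m UNIV"
    using U f g sgV maps ell2_scale by blast+
  have "l2inner m (T (\<lambda>x. f x + sg x)) (\<lambda>x. f x + sg x) =
     l2inner m (T f) f + l2inner m (T f) sg + (l2inner m (\<lambda>x. complex_of_real s * T g x) f + l2inner m (\<lambda>x. complex_of_real s * T g x) sg)"
    unfolding Th using fU sgU TfU sTgU by (simp add: l2inner_add_left l2inner_add_right ell2_add)
  also have "\<dots> = l2inner m (T f) f + complex_of_real s * l2inner m (T f) g + complex_of_real s * l2inner m (T g) f
      + complex_of_real (s\<^sup>2) * l2inner m (T g) g"
    unfolding sg_def by (simp add: l2inner_scale_left l2inner_scale_right power2_eq_square)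
  finally have e: "Re (l2inner m (T (\<lambda>x. f x + sg x)) (\<lambda>x. f x + sg x)) =
      Re (l2inner m (T f) f) + 2 * s * Re (l2inner m (T f) g) + s\<^sup>2 * Re (l2inner m (T g) g)"
    using symmetric[OF g f] by simp
  show "0 \<le> Re (l2inner m (T f) f) + 2 * s * Re (l2inner m (T f) g) + s\<^sup>2 * Re (l2inner m (T g) g)"
    using pos[OF hV] e by simp
qed

lemma l2norm_sq_sq_le_form:
  assumes pos: "\<And>f. f \<in> ell2 m \<Omega> \<Longrightarrow> Re (l2inner m (T f) f) \<ge> 0" and f: "f \<in> ell2 m \<Omega>"
  shows "((l2norm m (T f))\<^sup>2)\<^sup>2 \<le> Re (l2inner m (T f) f) * Re (l2inner m (T (T f)) (T f))"
  using positive_form_Cauchy_Schwarz[OF pos f maps[OF f]] l2inner_self[OF ell2_UNIV[OF maps[OF f]]]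
  by simp

lemma l2norm_le_if_form_le:
  assumes pos: "\<And>f. f \<in> ell2 m \<Omega> \<Longrightarrow> Re (l2inner m (T f) f) \<ge> 0"
    and le: "\<And>f. f \<in> ell2 m \<Omega> \<Longrightarrow> Re (l2inner m (T f) f) \<le> r * (l2norm m f)\<^sup>2"
    and h: "h \<in> ell2 m \<Omega>"
  shows "l2norm m (T h) \<le> r * l2norm m h"
proof -
  have "0 \<le> r * (l2norm m h)\<^sup>2" using pos[OF h] le[OF h] by linarith
  then have r_nonneg: "0 \<le> r * l2norm m h"
    using l2norm_nonneg[of h] by (cases "l2norm m h = 0") (auto simp: zero_le_mult_iff)
  show ?thesis
  proof (cases "l2norm m (T h) = 0")
    case True
    then show ?thesis using r_nonneg by simp
  next
    case False
    have "((l2norm m (T h))\<^sup>2)\<^sup>2 \<le> Re (l2inner m (T h) h) * Re (l2inner m (T (T h)) (T h))"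
      by (rule l2norm_sq_sq_le_form[OF pos h])
    also have "\<dots> \<le> (r * (l2norm m h)\<^sup>2) * (r * (l2norm m (T h))\<^sup>2)"
      using pos[OF h] le[OF h] pos[OF maps[OF h]] le[OF maps[OF h]] by (intro mult_mono) auto
    finally have "(l2norm m (T h))\<^sup>2 * (l2norm m (T h))\<^sup>2 \<le> (r * l2norm m h)\<^sup>2 * (l2norm m (T h))\<^sup>2"
      by (simp add: power2_eq_square algebra_simps)
    moreover have "(l2norm m (T h))\<^sup>2 > 0" using False by simp
    ultimately have "(l2norm m (T h))\<^sup>2 \<le> (r * l2norm m h)\<^sup>2" by (rule mult_right_le_imp_le)
    then show ?thesis using r_nonneg by (rule power2_le_imp_le)
  qed
qed

end

locale bounded_symmetric_operator = symmetric_operator +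
  fixes K :: real
  assumes bounded: "f \<in> ell2 m \<Omega> \<Longrightarrow> l2norm m (T f) \<le> K * l2norm m f"
    and bound_pos: "K > 0"
begin

lemma l2norm_sq_le_form:
  assumes pos: "\<And>f. f \<in> ell2 m \<Omega> \<Longrightarrow> Re (l2inner m (T f) f) \<ge> 0" and f: "f \<in> ell2 m \<Omega>"
  shows "(l2norm m (T f))\<^sup>2 \<le> K * Re (l2inner m (T f) f)"
proof (cases "l2norm m (T f) = 0")
  case True then show ?thesis using bound_pos pos[OF f] by simp
next
  case False
  have Tf: "T f \<in> ell2 m \<Omega>" by (rule maps[OF f])
  have "Re (l2inner m (T (T f)) (T f)) \<le> cmod (l2inner m (T (T f)) (T f))" by (rule complex_Re_le_cmod)
  also have "\<dots> \<le> l2norm m (T (T f)) * l2norm m (T f)"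
    using l2inner_Cauchy_Schwarz[OF ell2_UNIV[OF maps[OF Tf]] ell2_UNIV[OF Tf]] .
  also have "\<dots> \<le> K * l2norm m (T f) * l2norm m (T f)"
    using bounded[OF Tf] l2norm_nonneg by (simp add: mult_right_mono)
  finally have "Re (l2inner m (T (T f)) (T f)) \<le> K * (l2norm m (T f))\<^sup>2" by (simp add: power2_eq_square)
  then have "((l2norm m (T f))\<^sup>2)\<^sup>2 \<le> Re (l2inner m (T f) f) * (K * (l2norm m (T f))\<^sup>2)"
    using l2norm_sq_sq_le_form[OF pos f] mult_left_mono pos[OF f] order_trans by blast
  then have "(l2norm m (T f))\<^sup>2 * (l2norm m (T f))\<^sup>2 \<le> (K * Re (l2inner m (T f) f)) * (l2norm m (T f))\<^sup>2"
    by (simp add: power2_eq_square algebra_simps)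
  moreover have "(l2norm m (T f))\<^sup>2 > 0" using False by simp
  ultimately show ?thesis by (rule mult_right_le_imp_le)
qed

lemma inj_on_if_coercive:
  assumes coercive: "\<And>f. f \<in> ell2 m \<Omega> \<Longrightarrow> \<alpha> * (l2norm m f)\<^sup>2 \<le> Re (l2inner m (T f) f)" and "\<alpha> > 0"
  shows "inj_on T (ell2 m \<Omega>)"
proof (rule inj_onI)
  fix f g assume f: "f \<in> ell2 m \<Omega>" and g: "g \<in> ell2 m \<Omega>" and "T f = T g"
  then have "T (\<lambda>x. f x - g x) = (\<lambda>x. 0)" using linear_diff[OF f g] by simp
  then have "\<alpha> * (l2norm m (\<lambda>x. f x - g x))\<^sup>2 \<le> 0"
    using coercive[OF ell2_diff[OF f g]] by (simp add: l2inner_def)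
  then have "l2norm m (\<lambda>x. f x - g x) = 0" using \<open>\<alpha> > 0\<close> by (simp add: mult_le_0_iff)
  then show "f = g" using l2norm_eq_0_iff[OF ell2_diff[OF f g]] by (simp add: fun_eq_iff)
qed

lemma l2norm_contraction_if_coercive:
  assumes coercive: "\<And>f. f \<in> ell2 m \<Omega> \<Longrightarrow> \<alpha> * (l2norm m f)\<^sup>2 \<le> Re (l2inner m (T f) f)"
    and h: "h \<in> ell2 m \<Omega>"
  shows "l2norm m (\<lambda>x. h x - complex_of_real (1/K) * T h x) \<le> (1 - \<alpha> / K) * l2norm m h"
proof -
  let ?V = "ell2 m \<Omega>"
  define P where "P h = (\<lambda>x. h x - complex_of_real (1/K) * T h x)" for h
  have P_inner: "l2inner m (P f) g = l2inner m f g - complex_of_real (1/K) * l2inner m (T f) g"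
    if "f \<in> ?V" "g \<in> ?V" for f g
    using l2inner_diff_left[OF ell2_UNIV[OF that(1)] ell2_UNIV[OF ell2_scale[OF maps[OF that(1)]]] ell2_UNIV[OF that(2)]]
    unfolding P_def by (simp only: l2inner_scale_left)
  interpret P: symmetric_operator m \<Omega> P
  proof
    show "P f \<in> ?V" if "f \<in> ?V" for f unfolding P_def by (rule ell2_diff[OF that ell2_scale[OF maps[OF that]]])
    show "P (\<lambda>x. f x + g x) = (\<lambda>x. P f x + P g x)" if "f \<in> ?V" "g \<in> ?V" for f g
      unfolding P_def using additive[OF that] by (simp add: algebra_simps)
    show "P (\<lambda>x. complex_of_real c * f x) = (\<lambda>x. complex_of_real c * P f x)" if "f \<in> ?V" for f c
      unfolding P_def using real_homogeneous[OF that] by (simp add: algebra_simps)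
    show "l2inner m (P f) g = cnj (l2inner m (P g) f)" if "f \<in> ?V" "g \<in> ?V" for f g
      using P_inner[OF that] P_inner[OF that(2,1)] symmetric[OF that] l2inner_cnj[of g f] by simp
  qed
  have P_form: "0 \<le> Re (l2inner m (P h) h) \<and> Re (l2inner m (P h) h) \<le> (1 - \<alpha> / K) * (l2norm m h)\<^sup>2"
    if h: "h \<in> ?V" for h
  proof -
    have "Re (l2inner m (T h) h) \<le> cmod (l2inner m (T h) h)" by (rule complex_Re_le_cmod)
    also have "\<dots> \<le> l2norm m (T h) * l2norm m h"
      using l2inner_Cauchy_Schwarz[OF ell2_UNIV[OF maps[OF h]] ell2_UNIV[OF h]] .
    also have "\<dots> \<le> K * l2norm m h * l2norm m h" using bounded[OF h] l2norm_nonneg by (simp add: mult_right_mono)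
    finally have "Re (l2inner m (T h) h) \<le> K * (l2norm m h)\<^sup>2" by (simp add: power2_eq_square)
    then have "Re (l2inner m (T h) h) / K \<le> (l2norm m h)\<^sup>2"
      using bound_pos by (simp add: divide_le_eq mult.commute)
    moreover have "\<alpha> * (l2norm m h)\<^sup>2 / K \<le> Re (l2inner m (T h) h) / K"
      using coercive[OF h] bound_pos by (simp add: divide_right_mono)
    moreover have "Re (l2inner m (P h) h) = (l2norm m h)\<^sup>2 - Re (l2inner m (T h) h) / K"
      using P_inner[OF h h] l2inner_self[OF ell2_UNIV[OF h]] by simp
    ultimately show ?thesis by (simp add: algebra_simps)
  qed
  show ?thesis using P.l2norm_le_if_form_le[OF _ _ h] P_form unfolding P_def by blast
qed

text \<open>The fixed point of the contraction \<open>f \<mapsto> y/K + f - Tf/K\<close> solves \<open>Tf = y\<close>.\<close>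

lemma surj_if_coercive:
  assumes coercive: "\<And>f. f \<in> ell2 m \<Omega> \<Longrightarrow> \<alpha> * (l2norm m f)\<^sup>2 \<le> Re (l2inner m (T f) f)" and "\<alpha> > 0"
  shows "T ` ell2 m \<Omega> = ell2 m \<Omega>"
proof
  let ?V = "ell2 m \<Omega>"
  show "T ` ?V \<subseteq> ?V" using maps by blast
  show "?V \<subseteq> T ` ?V"
  proof
    fix y assume y: "y \<in> ?V"
    interpret M: Metric_space ?V l2dist by (rule Metric_space_ell2)
    define \<Phi> where "\<Phi> f = (\<lambda>x. complex_of_real (1/K) * y x + (f x - complex_of_real (1/K) * T f x))" for f
    have \<Phi>V: "\<Phi> \<in> ?V \<rightarrow> ?V"
      unfolding \<Phi>_def using ell2_add[OF ell2_scale[OF y] ell2_diff[OF _ ell2_scale[OF maps]]] by blast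
    have \<Phi>_contraction: "l2dist (\<Phi> f) (\<Phi> g) \<le> (1 - \<alpha> / K) * l2dist f g" if "f \<in> ?V" "g \<in> ?V" for f g
    proof -
      have "(\<lambda>x. \<Phi> f x - \<Phi> g x) =
          (\<lambda>x. (f x - g x) - complex_of_real (1/K) * T (\<lambda>x. f x - g x) x)"
        unfolding \<Phi>_def linear_diff[OF that] by (simp add: fun_eq_iff algebra_simps)
      then show ?thesis
        unfolding l2dist_def using l2norm_contraction_if_coercive[OF coercive ell2_diff[OF that]] by simp
    qed
    have "1 - \<alpha> / K < 1" using bound_pos \<open>\<alpha> > 0\<close> by simp
    then obtain f where f: "f \<in> ?V" "\<Phi> f = f"
      using M.Banach_fixedpoint_thm[OF mcomplete_ell2 _ \<Phi>V _ \<Phi>_contraction] ell2_zero_fun by blast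
    have "T f = y"
    proof
      fix x
      have "complex_of_real (1/K) * y x + (f x - complex_of_real (1/K) * T f x) = f x"
        using fun_cong[OF f(2), of x] by (simp add: \<Phi>_def)
      then show "T f x = y x" using bound_pos by (simp add: field_simps)
    qed
    then show "y \<in> T ` ?V" using f by blast
  qed
qed

lemma bij_betw_if_coercive:
  assumes "\<And>f. f \<in> ell2 m \<Omega> \<Longrightarrow> \<alpha> * (l2norm m f)\<^sup>2 \<le> Re (l2inner m (T f) f)" and "\<alpha> > 0"
  shows "bij_betw T (ell2 m \<Omega>) (ell2 m \<Omega>)"
  using inj_on_if_coercive[OF assms] surj_if_coercive[OF assms] by (simp add: bij_betw_def)

lemma l2norm_le_if_inverse_bounded_near:
  assumes bij: "bij_betw T (ell2 m \<Omega>) (ell2 m \<Omega>)" and y0: "y0 \<in> ell2 m \<Omega>" and r: "r > 0"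
    and near: "\<And>z. z \<in> ell2 m \<Omega> \<Longrightarrow> l2dist y0 z < r \<Longrightarrow> l2norm m (inv_into (ell2 m \<Omega>) T z) \<le> c"
    and g: "g \<in> ell2 m \<Omega>"
  shows "l2norm m g \<le> (4 * c / r) * l2norm m (T g)"
proof -
  let ?V = "ell2 m \<Omega>"
  define S where "S = inv_into ?V T"
  have S_in: "y \<in> ?V \<Longrightarrow> S y \<in> ?V" for y
    unfolding S_def using bij_betw_apply[OF bij_betw_inv_into[OF bij]] .
  note TS = bij_betw_inv_into_right[OF bij, folded S_def]
    and ST = bij_betw_inv_into_left[OF bij, folded S_def]
  show ?thesis
  proof (cases "l2norm m (T g) = 0")
    case True
    then have "T g = T (\<lambda>x. 0)"
      using l2norm_eq_0_iff[OF maps[OF g]] real_homogeneous[OF ell2_zero_fun, of 0] by simp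
    then have "g = S (T (\<lambda>x. 0))" using ST[OF g] by simp
    also have "\<dots> = (\<lambda>x. 0)" by (rule ST[OF ell2_zero_fun])
    finally show ?thesis using True by (simp add: l2norm_def)
  next
    case False
    define t where "t = r / (2 * l2norm m (T g))"
    have t: "t > 0" using False r l2norm_nonneg[of "T g"] by (simp add: t_def)
    define z where "z = (\<lambda>x. y0 x + complex_of_real t * T g x)"
    have tgV: "(\<lambda>x. complex_of_real t * g x) \<in> ?V" by (rule ell2_scale[OF g])
    have zV: "z \<in> ?V" unfolding z_def by (rule ell2_add[OF y0 ell2_scale[OF maps[OF g]]])
    have "l2dist y0 z = t * l2norm m (T g)"
      unfolding l2dist_def z_def using l2norm_scale[of "complex_of_real (- t)" "T g"] t by simp
    also have "\<dots> < r" using False r l2norm_nonneg[of "T g"] by (simp add: t_def)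
    finally have Sz: "l2norm m (S z) \<le> c" using near[OF zV] by (simp add: S_def)
    have "T (\<lambda>x. S y0 x + complex_of_real t * g x) = z"
      using additive[OF S_in[OF y0] tgV] real_homogeneous[OF g] TS[OF y0] by (simp add: z_def)
    then have "S z = (\<lambda>x. S y0 x + complex_of_real t * g x)"
      using ST[OF ell2_add[OF S_in[OF y0] tgV]] by simp
    then have "t * l2norm m g = l2norm m (\<lambda>x. S z x - S y0 x)"
      using l2norm_scale[of "complex_of_real t" g] t by simp
    also have "\<dots> \<le> l2norm m (S z) + l2norm m (S y0)"
      by (rule l2norm_diff_le[OF ell2_UNIV[OF S_in[OF zV]] ell2_UNIV[OF S_in[OF y0]]])
    also have "\<dots> \<le> 2 * c"
      using Sz near[OF y0] r by (simp add: S_def l2dist_def l2norm_def)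
    finally have "l2norm m g \<le> 2 * c / t" using t by (simp add: le_divide_eq mult.commute)
    also have "2 * c / t = (4 * c / r) * l2norm m (T g)" using False r by (simp add: t_def)
    finally show ?thesis .
  qed
qed

lemma l2norm_le_if_bij_betw:
  assumes bij: "bij_betw T (ell2 m \<Omega>) (ell2 m \<Omega>)"
  obtains C where "C > 0" "\<And>f. f \<in> ell2 m \<Omega> \<Longrightarrow> l2norm m f \<le> C * l2norm m (T f)"
proof -
  let ?V = "ell2 m \<Omega>"
  define S where "S = inv_into ?V T"
  have S_in: "S y \<in> ?V" if "y \<in> ?V" for y
    unfolding S_def using bij_betw_apply[OF bij_betw_inv_into[OF bij] that] .
  note TS = bij_betw_inv_into_right[OF bij, folded S_def]
  have S_adj: "l2inner m (S y) w = l2inner m y (S w)" if y: "y \<in> ?V" and w: "w \<in> ?V" for y w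
  proof -
    have "l2inner m (S y) w = l2inner m (S y) (T (S w))" using TS[OF w] by simp
    also have "\<dots> = cnj (l2inner m (T (S w)) (S y))" by (rule l2inner_cnj)
    also have "\<dots> = l2inner m y (S w)" using symmetric[OF S_in[OF w] S_in[OF y]] TS[OF y] by simp
    finally show ?thesis .
  qed
  interpret M: Metric_space ?V l2dist by (rule Metric_space_ell2)
  define F where "F n = {y \<in> ?V. l2norm m (S y) \<le> real n}" for n :: nat
  have closed: "closedin M.mtopology (F n)" for n
    unfolding F_def by (rule closedin_sublevel_if_self_adjoint[OF S_in S_adj])
  have cover: "(\<Union>n. F n) = ?V"
  proof
    show "?V \<subseteq> (\<Union>n. F n)"
    proof
      fix y assume "y \<in> ?V"
      moreover obtain n :: nat where "l2norm m (S y) \<le> real n" using real_arch_simple by blast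
      ultimately show "y \<in> (\<Union>n. F n)" by (auto simp: F_def)
    qed
  qed (auto simp: F_def)
  obtain n y0 r where r: "r > 0" and y0: "y0 \<in> ?V" and ball: "M.mball y0 r \<subseteq> F n"
    by (rule ell2_Baire_ball[where F=F, OF closed cover])
  have near: "l2norm m (inv_into ?V T z) \<le> real n" if "z \<in> ?V" "l2dist y0 z < r" for z
  proof -
    have "z \<in> M.mball y0 r" using y0 that by simp
    then show ?thesis using ball by (auto simp: F_def S_def)
  qed
  have main: "l2norm m g \<le> (4 * real n / r) * l2norm m (T g)" if "g \<in> ?V" for g
    using bij y0 r near that by (rule l2norm_le_if_inverse_bounded_near)
  show thesis
  proof (rule that)
    have "4 * real n / r \<ge> 0" using r by simp
    then show "4 * real n / r + 1 > 0" by linarith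
    show "l2norm m f \<le> (4 * real n / r + 1) * l2norm m (T f)" if "f \<in> ?V" for f
      using main[OF that] l2norm_nonneg[of "T f"] by (simp add: distrib_right)
  qed
qed

text \<open>Small values of the form give an approximate kernel, via \<open>\<parallel>Tf\<parallel>\<^sup>2 \<le> K Re\<langle>Tf,f\<rangle>\<close>.\<close>

lemma not_bij_betw_if_approx_kernel:
  assumes pos: "\<And>f. f \<in> ell2 m \<Omega> \<Longrightarrow> Re (l2inner m (T f) f) \<ge> 0"
    and approx: "\<And>\<epsilon>. \<epsilon> > 0 \<Longrightarrow> \<exists>f\<in>ell2 m \<Omega>. l2norm m f = 1 \<and> Re (l2inner m (T f) f) < \<epsilon>"
  shows "\<not> bij_betw T (ell2 m \<Omega>) (ell2 m \<Omega>)"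
proof
  assume "bij_betw T (ell2 m \<Omega>) (ell2 m \<Omega>)"
  then obtain C where C: "C > 0" "\<And>f. f \<in> ell2 m \<Omega> \<Longrightarrow> l2norm m f \<le> C * l2norm m (T f)"
    using l2norm_le_if_bij_betw by blast
  obtain f where f: "f \<in> ell2 m \<Omega>" "l2norm m f = 1" "Re (l2inner m (T f) f) < 1 / (C\<^sup>2 * K)"
    using approx[of "1 / (C\<^sup>2 * K)"] C(1) bound_pos by auto
  have "(l2norm m (T f))\<^sup>2 \<le> K * Re (l2inner m (T f) f)" by (rule l2norm_sq_le_form[OF pos f(1)])
  also have "\<dots> < K * (1 / (C\<^sup>2 * K))" using mult_strict_left_mono[OF f(3) bound_pos] .
  also have "\<dots> = 1 / C\<^sup>2" using bound_pos by simp
  finally have "(C * l2norm m (T f))\<^sup>2 < 1" using C(1) by (simp add: power_mult_distrib field_simps)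
  then have "C * l2norm m (T f) < 1" using power2_less_imp_less[of "C * l2norm m (T f)" 1] by simp
  then show False using C(2)[OF f(1)] f(2) by simp
qed

end

section \<open>The graph Laplacian\<close>

locale bounded_weighted_graph =
  fixes b :: "'a::countable \<Rightarrow> 'a \<Rightarrow> real" and m :: "'a \<Rightarrow> real"
  assumes weighted_graph: "weighted_graph b m" and condB: "condB b m"
begin

sublocale positive_weight m
  using weighted_graph by unfold_locales (simp add: weighted_graph_def)

lemma b_nonneg: "b x y \<ge> 0" using weighted_graph unfolding weighted_graph_def by blast
lemma b_sym: "b x y = b y x" using weighted_graph unfolding weighted_graph_def by blast
lemma b_summable: "(\<lambda>y. b x y) summable_on UNIV" using weighted_graph unfolding weighted_graph_def by blast

definition deg where "deg x = (\<Sum>\<^sub>\<infinity>y. b x y)"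
definition deg_bound where "deg_bound = (SUP x. deg x / m x)"

lemma deg_has_sum: "((\<lambda>y. b x y) has_sum deg x) UNIV"
  using b_summable deg_def by auto

lemma deg_nonneg: "deg x \<ge> 0"
  unfolding deg_def by (simp add: b_nonneg infsum_nonneg)

lemma deg_div_weight_le: "deg x / m x \<le> deg_bound"
  unfolding deg_bound_def using condB unfolding condB_def deg_def by (intro cSUP_upper) auto

lemma deg_le_deg_bound: "deg x \<le> deg_bound * m x"
  using deg_div_weight_le[of x] weight_pos[of x] by (simp add: divide_le_eq)

lemma deg_bound_nonneg: "deg_bound \<ge> 0"
  using deg_div_weight_le[of undefined] deg_nonneg[of undefined] weight_pos[of undefined]
  by (smt (verit) divide_nonneg_pos)

lemma b_le_deg: "b x y \<le> deg x"
proof -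
  have "sum (\<lambda>y. b x y) {y} \<le> deg x"
    unfolding deg_def by (rule finite_sum_le_infsum) (auto simp: b_summable b_nonneg)
  then show ?thesis by simp
qed

lemma b_le_deg_bound: "b x y \<le> deg_bound * m x" using b_le_deg deg_le_deg_bound order_trans by blast
lemma b_le_deg_bound_sym: "b x y \<le> deg_bound * m y" using b_le_deg_bound[of y x] b_sym by simp

lemma summable_pairs_left:
  assumes "\<And>x. h x \<ge> 0" "(\<lambda>x. deg x * h x) summable_on UNIV"
  shows "(\<lambda>(x,y). b x y * h x) summable_on UNIV"
proof -
  have "(\<lambda>(x,y). b x y * h x) summable_on Sigma UNIV (\<lambda>_. UNIV)"
  proof (rule summable_on_SigmaI[where g="\<lambda>x. deg x * h x"])
    fix x show "((\<lambda>y. case (x, y) of (x, y) \<Rightarrow> b x y * h x) has_sum deg x * h x) UNIV"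
      using has_sum_cmult_left[OF deg_has_sum[of x], of "h x"] by simp
  qed (use assms b_nonneg in auto)
  then show ?thesis by simp
qed

lemma summable_pairs_right:
  assumes "\<And>x. h x \<ge> 0" "(\<lambda>x. deg x * h x) summable_on UNIV"
  shows "(\<lambda>(x,y). b x y * h y) summable_on UNIV"
proof -
  have "(\<lambda>(x,y). b x y * h x) summable_on (UNIV \<times> UNIV)"
    using summable_pairs_left[OF assms] by simp
  then have "(\<lambda>(x,y). (\<lambda>(x,y). b x y * h x) (y,x)) summable_on (UNIV \<times> UNIV)"
    by (subst (asm) summable_on_swap) simp
  then show ?thesis by (simp add: b_sym)
qed

lemma infsum_pairs_left:
  assumes "\<And>x. h x \<ge> 0" "(\<lambda>x. deg x * h x) summable_on UNIV"
  shows "(\<Sum>\<^sub>\<infinity>(x,y). b x y * h x) = (\<Sum>\<^sub>\<infinity>x. deg x * h x)"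
proof -
  have S: "(\<lambda>(x,y). b x y * h x) summable_on Sigma UNIV (\<lambda>_. UNIV)" using summable_pairs_left[OF assms] by simp
  have "(\<Sum>\<^sub>\<infinity>x. \<Sum>\<^sub>\<infinity>y. b x y * h x) = (\<Sum>\<^sub>\<infinity>(x,y)\<in>Sigma UNIV (\<lambda>_. UNIV). b x y * h x)"
    using infsum_Sigma'_banach[OF S] by simp
  moreover have "(\<Sum>\<^sub>\<infinity>y. b x y * h x) = deg x * h x" for x
    by (simp add: infsum_cmult_left' deg_def)
  ultimately show ?thesis by simp
qed

lemma infsum_pairs_right:
  assumes "\<And>x. h x \<ge> 0" "(\<lambda>x. deg x * h x) summable_on UNIV"
  shows "(\<Sum>\<^sub>\<infinity>(x,y). b x y * h y) = (\<Sum>\<^sub>\<infinity>x. deg x * h x)"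
proof -
  have "((\<lambda>(x,y). b x y * h x) has_sum (\<Sum>\<^sub>\<infinity>x. deg x * h x)) (UNIV \<times> UNIV)"
    using summable_pairs_left[OF assms] infsum_pairs_left[OF assms] has_sum_infsum by fastforce
  then have "((\<lambda>(x,y). (\<lambda>(x,y). b x y * h x) (y,x)) has_sum (\<Sum>\<^sub>\<infinity>x. deg x * h x)) (UNIV \<times> UNIV)"
    by (subst (asm) has_sum_swap) simp
  then show ?thesis by (simp add: b_sym infsumI)
qed

lemma deg_weighted_l2:
  assumes f: "f \<in> ell2 m A"
  shows "(\<lambda>x. deg x * (cmod (f x))\<^sup>2) summable_on UNIV"
    and "(\<Sum>\<^sub>\<infinity>x. deg x * (cmod (f x))\<^sup>2) \<le> deg_bound * (l2norm m f)\<^sup>2"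
proof -
  have le: "deg x * (cmod (f x))\<^sup>2 \<le> deg_bound * l2dens f x" for x
    using mult_right_mono[OF deg_le_deg_bound[of x], of "(cmod (f x))\<^sup>2"] by (simp add: l2dens_def algebra_simps)
  have S: "(\<lambda>x. deg_bound * l2dens f x) summable_on UNIV" using f by (intro summable_on_cmult_right ell2_summable)
  show S2: "(\<lambda>x. deg x * (cmod (f x))\<^sup>2) summable_on UNIV"
    by (rule summable_on_comparison_test[OF S]) (use le deg_nonneg in auto)
  have "(\<Sum>\<^sub>\<infinity>x. deg x * (cmod (f x))\<^sup>2) \<le> (\<Sum>\<^sub>\<infinity>x. deg_bound * l2dens f x)"
    by (rule infsum_mono[OF S2 S le])
  also have "\<dots> = deg_bound * (l2norm m f)\<^sup>2" by (simp add: infsum_cmult_right' l2norm_power2)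
  finally show "(\<Sum>\<^sub>\<infinity>x. deg x * (cmod (f x))\<^sup>2) \<le> deg_bound * (l2norm m f)\<^sup>2" .
qed

lemma row_sq_summable: "f \<in> ell2 m A \<Longrightarrow> (\<lambda>y. b x y * (cmod (f y))\<^sup>2) summable_on UNIV"
proof -
  assume f: "f \<in> ell2 m A"
  have S: "(\<lambda>y. deg_bound * l2dens f y) summable_on UNIV" using f by (intro summable_on_cmult_right ell2_summable)
  have "b x y * (cmod (f y))\<^sup>2 \<le> deg_bound * l2dens f y" for y
    using mult_right_mono[OF b_le_deg_bound_sym[of x y], of "(cmod (f y))\<^sup>2"] by (simp add: l2dens_def algebra_simps)
  then show ?thesis
    by (intro summable_on_comparison_test[OF S]) (auto simp: b_nonneg)
qed

definition lap_sum :: "('a \<Rightarrow> complex) \<Rightarrow> 'a \<Rightarrow> complex" where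
  "lap_sum f x = (\<Sum>\<^sub>\<infinity>y. complex_of_real (b x y) * (f x - f y))"

lemma laplacian_eq: "laplacian b m f x = lap_sum f x / complex_of_real (m x)"
  unfolding laplacian_def lap_sum_def by simp

lemma row_abs_summable: "f \<in> ell2 m A \<Longrightarrow> (\<lambda>y. b x y * cmod (f y)) summable_on UNIV"
  and row_abs_Cauchy_Schwarz: "f \<in> ell2 m A \<Longrightarrow> (\<Sum>\<^sub>\<infinity>y. b x y * cmod (f y))\<^sup>2 \<le> deg x * (\<Sum>\<^sub>\<infinity>y. b x y * (cmod (f y))\<^sup>2)"
  using weighted_infsum_Cauchy_Schwarz[of "\<lambda>y. b x y" "\<lambda>y. cmod (f y)"] b_nonneg b_summable row_sq_summable by (auto simp: deg_def)

lemma lap_sum_summable_bound: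
  assumes f: "f \<in> ell2 m A"
  shows "(\<lambda>y. complex_of_real (b x y) * (f x - f y)) summable_on UNIV"
    and "cmod (lap_sum f x) \<le> deg x * cmod (f x) + (\<Sum>\<^sub>\<infinity>y. b x y * cmod (f y))"
proof -
  have le: "cmod (complex_of_real (b x y) * (f x - f y)) \<le> b x y * cmod (f x) + b x y * cmod (f y)" for y
  proof -
    have "cmod (complex_of_real (b x y) * (f x - f y)) = b x y * cmod (f x - f y)"
      by (simp add: norm_mult b_nonneg)
    also have "\<dots> \<le> b x y * (cmod (f x) + cmod (f y))"
      by (intro mult_left_mono norm_triangle_ineq4 b_nonneg)
    finally show ?thesis by (simp add: algebra_simps)
  qed
  have S: "(\<lambda>y. b x y * cmod (f x) + b x y * cmod (f y)) summable_on UNIV"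
    by (intro summable_on_add summable_on_cmult_left b_summable row_abs_summable[OF f])
  have A: "(\<lambda>y. cmod (complex_of_real (b x y) * (f x - f y))) summable_on UNIV"
    by (rule summable_on_comparison_test[OF S le]) simp
  then show "(\<lambda>y. complex_of_real (b x y) * (f x - f y)) summable_on UNIV"
    by (simp add: summable_on_iff_abs_summable_on_complex)
  have "cmod (lap_sum f x) \<le> (\<Sum>\<^sub>\<infinity>y. cmod (complex_of_real (b x y) * (f x - f y)))"
    unfolding lap_sum_def by (rule norm_infsum_bound[OF A])
  also have "\<dots> \<le> (\<Sum>\<^sub>\<infinity>y. b x y * cmod (f x) + b x y * cmod (f y))"
    by (rule infsum_mono[OF A S le])
  also have "\<dots> = deg x * cmod (f x) + (\<Sum>\<^sub>\<infinity>y. b x y * cmod (f y))"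
    using b_summable row_abs_summable[OF f]
    by (subst infsum_add) (auto intro: summable_on_cmult_left simp: infsum_cmult_left' deg_def)
  finally show "cmod (lap_sum f x) \<le> deg x * cmod (f x) + (\<Sum>\<^sub>\<infinity>y. b x y * cmod (f y))" .
qed

lemma neighbour_sq_sums:
  assumes f: "f \<in> ell2 m A"
  shows "(\<lambda>x. \<Sum>\<^sub>\<infinity>y. b x y * (cmod (f y))\<^sup>2) summable_on UNIV"
    and "(\<Sum>\<^sub>\<infinity>x. \<Sum>\<^sub>\<infinity>y. b x y * (cmod (f y))\<^sup>2) \<le> deg_bound * (l2norm m f)\<^sup>2"
proof -
  have P: "(\<lambda>(x,y). b x y * (cmod (f y))\<^sup>2) summable_on UNIV"
    by (rule summable_pairs_right) (use deg_weighted_l2[OF f] in auto)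
  then have P': "(\<lambda>(x,y). b x y * (cmod (f y))\<^sup>2) summable_on Sigma UNIV (\<lambda>_. UNIV)" by simp
  show "(\<lambda>x. \<Sum>\<^sub>\<infinity>y. b x y * (cmod (f y))\<^sup>2) summable_on UNIV"
    using summable_on_Sigma_banach[OF P'] by simp
  have "(\<Sum>\<^sub>\<infinity>x. \<Sum>\<^sub>\<infinity>y. b x y * (cmod (f y))\<^sup>2) = (\<Sum>\<^sub>\<infinity>(x,y). b x y * (cmod (f y))\<^sup>2)"
    using infsum_Sigma'_banach[OF P'] by simp
  also have "\<dots> = (\<Sum>\<^sub>\<infinity>x. deg x * (cmod (f x))\<^sup>2)"
    by (rule infsum_pairs_right) (use deg_weighted_l2[OF f] in auto)
  also have "\<dots> \<le> deg_bound * (l2norm m f)\<^sup>2" by (rule deg_weighted_l2(2)[OF f])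
  finally show "(\<Sum>\<^sub>\<infinity>x. \<Sum>\<^sub>\<infinity>y. b x y * (cmod (f y))\<^sup>2) \<le> deg_bound * (l2norm m f)\<^sup>2" .
qed

lemma l2dens_laplacian_le:
  assumes f: "f \<in> ell2 m A"
  shows "l2dens (laplacian b m f) x \<le>
    2 * deg_bound\<^sup>2 * l2dens f x + 2 * deg_bound * (\<Sum>\<^sub>\<infinity>y. b x y * (cmod (f y))\<^sup>2)"
proof -
  define T where "T = (\<Sum>\<^sub>\<infinity>y. b x y * (cmod (f y))\<^sup>2)"
  define S where "S = (\<Sum>\<^sub>\<infinity>y. b x y * cmod (f y))"
  have Tnn: "T \<ge> 0" unfolding T_def by (intro infsum_nonneg) (simp add: b_nonneg)
  have mp: "m x > 0" by (rule weight_pos)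
  have n1: "l2dens (laplacian b m f) x = (cmod (lap_sum f x))\<^sup>2 / m x"
    using mp by (simp add: l2dens_def laplacian_eq norm_divide power2_eq_square)
  have "cmod (lap_sum f x) \<le> deg x * cmod (f x) + S" using lap_sum_summable_bound(2)[OF f] by (simp add: S_def)
  then have "(cmod (lap_sum f x))\<^sup>2 \<le> (deg x * cmod (f x) + S)\<^sup>2"
    by (intro power_mono) auto
  also have "\<dots> \<le> 2 * (deg x * cmod (f x))\<^sup>2 + 2 * S\<^sup>2"
    using sum_squares_ge_zero[of "deg x * cmod (f x) - S" 0] by (simp add: power2_eq_square algebra_simps)
  also have "\<dots> \<le> 2 * (deg x * cmod (f x))\<^sup>2 + 2 * (deg x * T)"
    using row_abs_Cauchy_Schwarz[OF f, of x] by (simp add: S_def T_def)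
  finally have A: "(cmod (lap_sum f x))\<^sup>2 \<le> 2 * (deg x * cmod (f x))\<^sup>2 + 2 * (deg x * T)" .
  have d1: "(deg x)\<^sup>2 \<le> (deg_bound * m x)\<^sup>2" using deg_le_deg_bound deg_nonneg by (intro power_mono) auto
  have B1: "(deg x * cmod (f x))\<^sup>2 / m x \<le> deg_bound\<^sup>2 * l2dens f x"
  proof -
    have "(deg x * cmod (f x))\<^sup>2 \<le> (deg_bound * m x)\<^sup>2 * (cmod (f x))\<^sup>2"
      using mult_right_mono[OF d1, of "(cmod (f x))\<^sup>2"] by (simp add: power_mult_distrib)
    then show ?thesis using mp by (simp add: divide_le_eq l2dens_def power2_eq_square algebra_simps)
  qed
  have B2: "deg x * T / m x \<le> deg_bound * T"
    using mult_right_mono[OF deg_le_deg_bound[of x] Tnn] mp by (simp add: divide_le_eq algebra_simps)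
  have "l2dens (laplacian b m f) x \<le> (2 * (deg x * cmod (f x))\<^sup>2 + 2 * (deg x * T)) / m x"
    unfolding n1 using A mp by (simp add: divide_right_mono)
  also have "\<dots> = 2 * ((deg x * cmod (f x))\<^sup>2 / m x) + 2 * (deg x * T / m x)"
    by (simp add: add_divide_distrib)
  also have "\<dots> \<le> 2 * deg_bound\<^sup>2 * l2dens f x + 2 * deg_bound * T" using B1 B2 by simp
  finally show ?thesis unfolding T_def .
qed

lemma laplacian_ell2:
  assumes f: "f \<in> ell2 m A"
  shows "laplacian b m f \<in> ell2 m UNIV" and "l2norm m (laplacian b m f) \<le> 2 * deg_bound * l2norm m f"
proof -
  define T where "T x = (\<Sum>\<^sub>\<infinity>y. b x y * (cmod (f y))\<^sup>2)" for x
  have pw: "l2dens (laplacian b m f) x \<le> 2 * deg_bound\<^sup>2 * l2dens f x + 2 * deg_bound * T x" for x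
    unfolding T_def by (rule l2dens_laplacian_le[OF f])
  have TS: "T summable_on UNIV" unfolding T_def by (rule neighbour_sq_sums(1)[OF f])
  have S2: "(\<lambda>x. 2 * deg_bound\<^sup>2 * l2dens f x + 2 * deg_bound * T x) summable_on UNIV"
    using TS ell2_summable[OF f] by (intro summable_on_add summable_on_cmult_right) auto
  have NS: "l2dens (laplacian b m f) summable_on UNIV"
    by (rule summable_on_comparison_test[OF S2 pw]) (simp add: l2dens_nonneg)
  then show "laplacian b m f \<in> ell2 m UNIV" by (simp add: ell2_iff)
  have "(l2norm m (laplacian b m f))\<^sup>2 \<le> (\<Sum>\<^sub>\<infinity>x. 2 * deg_bound\<^sup>2 * l2dens f x + 2 * deg_bound * T x)"
    unfolding l2norm_power2 by (rule infsum_mono[OF NS S2 pw])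
  also have "\<dots> = 2 * deg_bound\<^sup>2 * (l2norm m f)\<^sup>2 + 2 * deg_bound * (\<Sum>\<^sub>\<infinity>x. T x)"
    using TS ell2_summable[OF f]
    by (subst infsum_add) (auto intro!: summable_on_cmult_right simp: infsum_cmult_right' l2norm_power2)
  also have "\<dots> \<le> 2 * deg_bound\<^sup>2 * (l2norm m f)\<^sup>2 + 2 * deg_bound * (deg_bound * (l2norm m f)\<^sup>2)"
    using neighbour_sq_sums(2)[OF f] deg_bound_nonneg unfolding T_def by (intro add_left_mono mult_left_mono) auto
  also have "\<dots> = (2 * deg_bound * l2norm m f)\<^sup>2" by (simp add: power2_eq_square algebra_simps)
  finally show "l2norm m (laplacian b m f) \<le> 2 * deg_bound * l2norm m f"
    using deg_bound_nonneg l2norm_nonneg by (meson mult_nonneg_nonneg power2_le_imp_le zero_le_numeral)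
qed

lemma summable_on_energy_half:
  assumes f: "f \<in> ell2 m UNIV" and g: "g \<in> ell2 m UNIV"
  shows "(\<lambda>(x,y). complex_of_real (b x y) * (f x - f y) * cnj (g x)) summable_on UNIV"
proof -
  define Q where "Q = (\<lambda>(x,y). complex_of_real (b x y) * (f x - f y) * cnj (g x))"
  define B where "B = (\<lambda>(x,y). b x y * (cmod (f x))\<^sup>2 + 2 * (b x y * (cmod (g x))\<^sup>2) + b x y * (cmod (f y))\<^sup>2)"
  have Bs: "B summable_on UNIV"
  proof -
    have "(\<lambda>(x,y). b x y * (cmod (f x))\<^sup>2) summable_on UNIV" "(\<lambda>(x,y). b x y * (cmod (g x))\<^sup>2) summable_on UNIV"
         "(\<lambda>(x,y). b x y * (cmod (f y))\<^sup>2) summable_on UNIV"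
      using summable_pairs_left summable_pairs_right deg_weighted_l2(1)[OF f] deg_weighted_l2(1)[OF g] by auto
    then have "(\<lambda>p. (\<lambda>(x,y). b x y * (cmod (f x))\<^sup>2) p + 2 * (\<lambda>(x,y). b x y * (cmod (g x))\<^sup>2) p + (\<lambda>(x,y). b x y * (cmod (f y))\<^sup>2) p) summable_on UNIV"
      by (intro summable_on_add summable_on_cmult_right)
    then show ?thesis unfolding B_def by (simp add: case_prod_unfold)
  qed
  have Qle: "cmod (Q p) \<le> B p" for p
  proof (cases p)
    case (Pair x y)
    have "cmod (Q p) = b x y * cmod (f x - f y) * cmod (g x)" by (simp add: Q_def Pair norm_mult b_nonneg)
    also have "\<dots> \<le> b x y * (cmod (f x) + cmod (f y)) * cmod (g x)"
      by (intro mult_right_mono mult_left_mono norm_triangle_ineq4 b_nonneg) auto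
    also have "\<dots> = b x y * (cmod (f x) * cmod (g x)) + b x y * (cmod (f y) * cmod (g x))"
      by (simp add: algebra_simps)
    also have "\<dots> \<le> b x y * ((cmod (f x))\<^sup>2 + (cmod (g x))\<^sup>2) + b x y * ((cmod (f y))\<^sup>2 + (cmod (g x))\<^sup>2)"
      by (intro add_mono mult_left_mono mult_le_sum_squares b_nonneg)
    also have "\<dots> = B p" by (simp add: B_def Pair algebra_simps)
    finally show ?thesis .
  qed
  have Qs: "Q summable_on UNIV"
    unfolding summable_on_iff_abs_summable_on_complex
    by (rule summable_on_comparison_test[OF Bs Qle]) simp
  then show ?thesis by (simp add: Q_def)
qed

lemma energy_eq_l2inner_laplacian:
  assumes f: "f \<in> ell2 m UNIV" and g: "g \<in> ell2 m UNIV"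
  shows "energy b f g = l2inner m (laplacian b m f) g"
proof -
  define Q where "Q = (\<lambda>(x,y). complex_of_real (b x y) * (f x - f y) * cnj (g x))"
  have Qs: "Q summable_on UNIV" unfolding Q_def by (rule summable_on_energy_half[OF f g])
  then have "(Q has_sum (\<Sum>\<^sub>\<infinity>p. Q p)) (UNIV \<times> UNIV)" by simp
  then have "((\<lambda>(x,y). Q (y,x)) has_sum (\<Sum>\<^sub>\<infinity>p. Q p)) (UNIV \<times> UNIV)"
    by (subst (asm) has_sum_swap)
  from has_sum_add[OF has_sum_infsum[OF Qs] this[simplified]]
  have "((\<lambda>(x,y). complex_of_real (b x y) * (f x - f y) * cnj (g x - g y)) has_sum 2 * (\<Sum>\<^sub>\<infinity>p. Q p)) UNIV"
    by (simp add: Q_def case_prod_unfold b_sym[of "snd _" "fst _"] algebra_simps)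
  then have E: "energy b f g = (\<Sum>\<^sub>\<infinity>p. Q p)" unfolding energy_def by (simp add: infsumI)
  have "(\<lambda>(x,y). Q (x,y)) summable_on Sigma UNIV (\<lambda>_. UNIV)" using Qs by simp
  from infsum_Sigma'_banach[OF this]
  have "(\<Sum>\<^sub>\<infinity>p. Q p) = (\<Sum>\<^sub>\<infinity>x. \<Sum>\<^sub>\<infinity>y. Q (x,y))" by simp
  also have "\<dots> = (\<Sum>\<^sub>\<infinity>x. laplacian b m f x * cnj (g x) * complex_of_real (m x))"
  proof (rule infsum_cong)
    fix x
    have "(\<Sum>\<^sub>\<infinity>y. Q (x,y)) = lap_sum f x * cnj (g x)"
      unfolding Q_def lap_sum_def by (simp add: infsum_cmult_left')
    also have "\<dots> = laplacian b m f x * cnj (g x) * complex_of_real (m x)"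
      using weight_pos[of x] by (simp add: laplacian_eq)
    finally show "(\<Sum>\<^sub>\<infinity>y. Q (x,y)) = laplacian b m f x * cnj (g x) * complex_of_real (m x)" .
  qed
  finally show ?thesis using E by (simp add: l2inner_def)
qed

definition lap_dir where "lap_dir \<Omega> f = (\<lambda>x. if x \<in> \<Omega> then laplacian b m f x else 0)"

lemma lap_dir_ell2: "f \<in> ell2 m \<Omega> \<Longrightarrow> lap_dir \<Omega> f \<in> ell2 m \<Omega> \<and> l2norm m (lap_dir \<Omega> f) \<le> 2 * deg_bound * l2norm m f"
proof -
  assume f: "f \<in> ell2 m \<Omega>"
  have le: "l2dens (lap_dir \<Omega> f) x \<le> l2dens (laplacian b m f) x" for x by (simp add: lap_dir_def l2dens_def l2dens_nonneg)
  have S: "l2dens (laplacian b m f) summable_on UNIV" using laplacian_ell2(1)[OF f] ell2_summable by blast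
  have S2: "l2dens (lap_dir \<Omega> f) summable_on UNIV" by (rule summable_on_comparison_test[OF S le l2dens_nonneg])
  have "(l2norm m (lap_dir \<Omega> f))\<^sup>2 \<le> (l2norm m (laplacian b m f))\<^sup>2"
    unfolding l2norm_power2 by (rule infsum_mono[OF S2 S le])
  then have "l2norm m (lap_dir \<Omega> f) \<le> l2norm m (laplacian b m f)" using l2norm_nonneg power2_le_imp_le by blast
  then show ?thesis using laplacian_ell2(2)[OF f] S2 by (auto simp: ell2_iff lap_dir_def)
qed

lemma lap_dir_l2inner: "f \<in> ell2 m \<Omega> \<Longrightarrow> g \<in> ell2 m \<Omega> \<Longrightarrow> l2inner m (lap_dir \<Omega> f) g = energy b f g"
proof -
  assume f: "f \<in> ell2 m \<Omega>" and g: "g \<in> ell2 m \<Omega>"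
  have "l2inner m (lap_dir \<Omega> f) g = l2inner m (laplacian b m f) g"
    unfolding l2inner_def lap_dir_def using g by (intro infsum_cong) (auto simp: ell2_iff)
  also have "\<dots> = energy b f g" using energy_eq_l2inner_laplacian ell2_UNIV f g by metis
  finally show ?thesis .
qed

lemma dirichlet_laplacian_eq: "f \<in> ell2 m \<Omega> \<Longrightarrow> dirichlet_laplacian b m \<Omega> f = lap_dir \<Omega> f"
  unfolding dirichlet_laplacian_def
proof (rule the_equality)
  assume f: "f \<in> ell2 m \<Omega>"
  show "lap_dir \<Omega> f \<in> ell2 m \<Omega> \<and> (\<forall>g\<in>ell2 m \<Omega>. energy b f g = l2inner m (lap_dir \<Omega> f) g)"
    using lap_dir_ell2[OF f] lap_dir_l2inner[OF f] by auto
  fix u assume u: "u \<in> ell2 m \<Omega> \<and> (\<forall>g\<in>ell2 m \<Omega>. energy b f g = l2inner m u g)"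
  show "u = lap_dir \<Omega> f"
    by (rule ell2_eqI) (use u lap_dir_ell2[OF f] lap_dir_l2inner[OF f] in auto)
qed

lemma lap_sum_add: "f \<in> ell2 m A \<Longrightarrow> g \<in> ell2 m A \<Longrightarrow> lap_sum (\<lambda>x. f x + g x) x = lap_sum f x + lap_sum g x"
proof -
  assume f: "f \<in> ell2 m A" and g: "g \<in> ell2 m A"
  have e: "(\<lambda>y. complex_of_real (b x y) * ((f x + g x) - (f y + g y))) =
     (\<lambda>y. complex_of_real (b x y) * (f x - f y) + complex_of_real (b x y) * (g x - g y))"
    by (simp add: algebra_simps)
  show ?thesis unfolding lap_sum_def e by (rule infsum_add[OF lap_sum_summable_bound(1)[OF f] lap_sum_summable_bound(1)[OF g]])
qed

lemma lap_sum_scale: "lap_sum (\<lambda>x. c * f x) x = c * lap_sum f x"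
  unfolding lap_sum_def by (subst infsum_cmult_right'[symmetric]) (simp add: algebra_simps)

lemma lap_dir_add: "f \<in> ell2 m \<Omega> \<Longrightarrow> g \<in> ell2 m \<Omega> \<Longrightarrow> lap_dir \<Omega> (\<lambda>x. f x + g x) = (\<lambda>x. lap_dir \<Omega> f x + lap_dir \<Omega> g x)"
  by (auto simp: lap_dir_def laplacian_eq lap_sum_add add_divide_distrib)

lemma lap_dir_scale: "lap_dir \<Omega> (\<lambda>x. c * f x) = (\<lambda>x. c * lap_dir \<Omega> f x)"
  by (auto simp: lap_dir_def laplacian_eq lap_sum_scale)

lemma energy_cnj: "energy b f g = cnj (energy b g f)"
proof -
  have "cnj (\<Sum>\<^sub>\<infinity>(x,y). complex_of_real (b x y) * (g x - g y) * cnj (f x - f y)) =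
        (\<Sum>\<^sub>\<infinity>(x,y). complex_of_real (b x y) * (f x - f y) * cnj (g x - g y))"
    by (subst infsum_cnj[symmetric]) (simp add: case_prod_unfold algebra_simps del: infsum_cnj)
  then show ?thesis by (simp add: energy_def)
qed

definition qform where "qform f = (1/2) * (\<Sum>\<^sub>\<infinity>(x,y). b x y * (cmod (f x - f y))\<^sup>2)"

lemma qform_summable: "f \<in> ell2 m A \<Longrightarrow> (\<lambda>(x,y). b x y * (cmod (f x - f y))\<^sup>2) summable_on UNIV"
proof -
  assume f: "f \<in> ell2 m A"
  have "(\<lambda>(x,y). b x y * (cmod (f x))\<^sup>2) summable_on UNIV" "(\<lambda>(x,y). b x y * (cmod (f y))\<^sup>2) summable_on UNIV"
    using summable_pairs_left summable_pairs_right deg_weighted_l2(1)[OF f] by auto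
  then have S: "(\<lambda>p. 2 * (\<lambda>(x,y). b x y * (cmod (f x))\<^sup>2) p + 2 * (\<lambda>(x,y). b x y * (cmod (f y))\<^sup>2) p) summable_on UNIV"
    by (intro summable_on_add summable_on_cmult_right)
  have le: "(\<lambda>(x,y). b x y * (cmod (f x - f y))\<^sup>2) p \<le> 2 * (\<lambda>(x,y). b x y * (cmod (f x))\<^sup>2) p + 2 * (\<lambda>(x,y). b x y * (cmod (f y))\<^sup>2) p" for p
  proof (cases p)
    case (Pair x y)
    have "(cmod (f x - f y))\<^sup>2 \<le> 2 * (cmod (f x))\<^sup>2 + 2 * (cmod (f y))\<^sup>2"
      using norm_add_sq_le[of "f x" "- f y"] by simp
    then have "b x y * (cmod (f x - f y))\<^sup>2 \<le> b x y * (2 * (cmod (f x))\<^sup>2 + 2 * (cmod (f y))\<^sup>2)"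
      by (rule mult_left_mono) (rule b_nonneg)
    then show ?thesis using Pair by (simp add: algebra_simps)
  qed
  show ?thesis by (rule summable_on_comparison_test[OF S le]) (auto simp: b_nonneg)
qed

lemma energy_self: "f \<in> ell2 m A \<Longrightarrow> energy b f f = complex_of_real (qform f) \<and> qform f \<ge> 0"
proof -
  assume f: "f \<in> ell2 m A"
  have pw: "complex_of_real (b x y) * (f x - f y) * cnj (f x - f y) = complex_of_real (b x y * (cmod (f x - f y))\<^sup>2)" for x y
    by (simp only: of_real_mult complex_norm_square mult.assoc)
  have eq: "(\<lambda>(x,y). complex_of_real (b x y * (cmod (f x - f y))\<^sup>2)) = (\<lambda>p. complex_of_real ((\<lambda>(x,y). b x y * (cmod (f x - f y))\<^sup>2) p))"
    by (auto simp: fun_eq_iff)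
  have "energy b f f = (1/2) * (\<Sum>\<^sub>\<infinity>p. complex_of_real ((\<lambda>(x,y). b x y * (cmod (f x - f y))\<^sup>2) p))"
    unfolding energy_def pw eq ..
  also have "\<dots> = complex_of_real (qform f)"
    using infsum_of_real[OF qform_summable[OF f]] by (simp add: qform_def)
  finally show ?thesis using b_nonneg by (auto simp: qform_def intro!: infsum_nonneg)
qed

lemma qform_cong: "(\<And>x y. g x - g y = h x - h y) \<Longrightarrow> qform g = qform h"
  unfolding qform_def by simp

lemma qform_scale: "qform (\<lambda>x. c * f x) = (cmod c)\<^sup>2 * qform f"
proof -
  have "(\<lambda>(x,y). b x y * (cmod (c * f x - c * f y))\<^sup>2) = (\<lambda>p. (cmod c)\<^sup>2 * (\<lambda>(x,y). b x y * (cmod (f x - f y))\<^sup>2) p)"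
    by (auto simp: fun_eq_iff right_diff_distrib[symmetric] norm_mult power_mult_distrib)
  then show ?thesis unfolding qform_def by (simp add: infsum_cmult_right')
qed

definition lap_shift where "lap_shift \<Omega> t = (\<lambda>f x. lap_dir \<Omega> f x - complex_of_real t * f x)"

lemma lap_shift_ell2: "f \<in> ell2 m \<Omega> \<Longrightarrow> lap_shift \<Omega> t f \<in> ell2 m \<Omega>"
  unfolding lap_shift_def using lap_dir_ell2 ell2_diff ell2_scale by blast

lemma lap_shift_add: "f \<in> ell2 m \<Omega> \<Longrightarrow> g \<in> ell2 m \<Omega> \<Longrightarrow> lap_shift \<Omega> t (\<lambda>x. f x + g x) = (\<lambda>x. lap_shift \<Omega> t f x + lap_shift \<Omega> t g x)"
  unfolding lap_shift_def by (simp add: lap_dir_add algebra_simps)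

lemma lap_shift_scale: "lap_shift \<Omega> t (\<lambda>x. complex_of_real c * f x) = (\<lambda>x. complex_of_real c * lap_shift \<Omega> t f x)"
  unfolding lap_shift_def by (simp add: lap_dir_scale algebra_simps)

lemma lap_shift_l2inner: "f \<in> ell2 m \<Omega> \<Longrightarrow> g \<in> ell2 m \<Omega> \<Longrightarrow> l2inner m (lap_shift \<Omega> t f) g = energy b f g - complex_of_real t * l2inner m f g"
proof -
  assume f: "f \<in> ell2 m \<Omega>" and g: "g \<in> ell2 m \<Omega>"
  have "l2inner m (lap_shift \<Omega> t f) g = l2inner m (lap_dir \<Omega> f) g - l2inner m (\<lambda>x. complex_of_real t * f x) g"
    unfolding lap_shift_def
    by (rule l2inner_diff_left[OF ell2_UNIV[OF conjunct1[OF lap_dir_ell2[OF f]]] ell2_UNIV[OF ell2_scale[OF f]] ell2_UNIV[OF g]])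
  then show ?thesis using lap_dir_l2inner[OF f g] by (simp add: l2inner_scale_left)
qed

lemma lap_shift_sym: "f \<in> ell2 m \<Omega> \<Longrightarrow> g \<in> ell2 m \<Omega> \<Longrightarrow> l2inner m (lap_shift \<Omega> t f) g = cnj (l2inner m (lap_shift \<Omega> t g) f)"
  using lap_shift_l2inner[of f \<Omega> g t] lap_shift_l2inner[of g \<Omega> f t] energy_cnj[of f g] l2inner_cnj[of f g] by simp

lemma lap_shift_Re: "f \<in> ell2 m \<Omega> \<Longrightarrow> Re (l2inner m (lap_shift \<Omega> t f) f) = qform f - t * (l2norm m f)\<^sup>2"
  using lap_shift_l2inner[of f \<Omega> f t] energy_self[of f \<Omega>] l2inner_self[OF ell2_UNIV, of f \<Omega>] by simp

lemma lap_shift_bounded: "f \<in> ell2 m \<Omega> \<Longrightarrow> l2norm m (lap_shift \<Omega> t f) \<le> (2 * deg_bound + \<bar>t\<bar> + 1) * l2norm m f"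
proof -
  assume f: "f \<in> ell2 m \<Omega>"
  have "l2norm m (lap_shift \<Omega> t f) \<le> l2norm m (lap_dir \<Omega> f) + l2norm m (\<lambda>x. complex_of_real t * f x)"
    unfolding lap_shift_def by (rule l2norm_diff_le[OF ell2_UNIV[OF conjunct1[OF lap_dir_ell2[OF f]]] ell2_UNIV[OF ell2_scale[OF f]]])
  also have "\<dots> \<le> 2 * deg_bound * l2norm m f + \<bar>t\<bar> * l2norm m f" using lap_dir_ell2[OF f] by (simp add: l2norm_scale)
  also have "\<dots> \<le> (2 * deg_bound + \<bar>t\<bar> + 1) * l2norm m f" using l2norm_nonneg[of f] by (simp add: algebra_simps)
  finally show ?thesis .
qed

lemma bounded_symmetric_operator_lap_shift:
  "bounded_symmetric_operator m \<Omega> (lap_shift \<Omega> t) (2 * deg_bound + \<bar>t\<bar> + 1)"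
  by unfold_locales
    ((rule weight_pos lap_shift_ell2 lap_shift_add lap_shift_scale lap_shift_sym lap_shift_bounded; assumption)
      | simp add: add_nonneg_pos deg_bound_nonneg)+

lemma laplacian_zero: "laplacian b m (\<lambda>x. 0) = (\<lambda>x. 0)"
  by (simp add: fun_eq_iff laplacian_eq lap_sum_def)

lemma l2norm_laplacian_le_laplacian_norm:
  assumes f: "f \<in> ell2 m UNIV"
  shows "l2norm m (laplacian b m f) \<le> laplacian_norm b m * l2norm m f"
proof (cases "l2norm m f = 0")
  case True
  then have "f = (\<lambda>x. 0)" using l2norm_eq_0_iff[OF f] by simp
  then show ?thesis by (simp add: laplacian_zero l2norm_def)
next
  case False
  define n where "n = l2norm m f"
  have np: "n > 0" using False l2norm_nonneg[of f] by (simp add: n_def)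
  define h where "h = (\<lambda>x. complex_of_real (1/n) * f x)"
  have hV: "h \<in> ell2 m UNIV" unfolding h_def by (rule ell2_scale[OF f])
  have hn: "l2norm m h = 1" unfolding h_def l2norm_scale norm_of_real using np by (simp add: n_def)
  have lh: "laplacian b m h = (\<lambda>x. complex_of_real (1/n) * laplacian b m f x)"
    unfolding h_def by (rule ext) (simp only: laplacian_eq lap_sum_scale times_divide_eq_right)
  have "l2norm m (laplacian b m h) \<le> laplacian_norm b m"
    unfolding laplacian_norm_def
  proof (rule cSup_upper)
    show "l2norm m (laplacian b m h) \<in> {l2norm m (laplacian b m f) |f. f \<in> ell2 m UNIV \<and> l2norm m f \<le> 1}"
      using hV hn by auto
    show "bdd_above {l2norm m (laplacian b m f) |f. f \<in> ell2 m UNIV \<and> l2norm m f \<le> 1}"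
    proof (rule bdd_aboveI)
      fix z assume "z \<in> {l2norm m (laplacian b m f) |f. f \<in> ell2 m UNIV \<and> l2norm m f \<le> 1}"
      then obtain g where g: "g \<in> ell2 m UNIV" "l2norm m g \<le> 1" "z = l2norm m (laplacian b m g)" by blast
      have "z \<le> 2 * deg_bound * l2norm m g" using laplacian_ell2(2)[OF g(1)] g(3) by simp
      also have "\<dots> \<le> 2 * deg_bound * 1" using g(2) deg_bound_nonneg by (intro mult_left_mono) auto
      finally show "z \<le> 2 * deg_bound" by simp
    qed
  qed
  moreover have "l2norm m (laplacian b m h) = l2norm m (laplacian b m f) / n"
    unfolding lh l2norm_scale using np by (simp add: norm_divide)
  ultimately show ?thesis using np by (simp add: n_def divide_le_eq mult.commute)
qed

subsection \<open>The bottom of the spectrum\<close>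

definition rayleigh_bottom :: "'a set \<Rightarrow> real" where
  "rayleigh_bottom \<Omega> = Inf {qform f | f. f \<in> ell2 m \<Omega> \<and> l2norm m f = 1}"

lemma rayleigh_bottom_le:
  assumes "f \<in> ell2 m \<Omega>" and "l2norm m f = 1"
  shows "rayleigh_bottom \<Omega> \<le> qform f"
  unfolding rayleigh_bottom_def
proof (rule cInf_lower)
  show "bdd_below {qform f | f. f \<in> ell2 m \<Omega> \<and> l2norm m f = 1}"
    using energy_self by (intro bdd_belowI[of _ 0]) blast
qed (use assms in blast)

lemma rayleigh_bottom_greatest:
  assumes "\<Omega> \<noteq> {}" and "\<And>f. f \<in> ell2 m \<Omega> \<Longrightarrow> l2norm m f = 1 \<Longrightarrow> c \<le> qform f"
  shows "c \<le> rayleigh_bottom \<Omega>"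
  unfolding rayleigh_bottom_def
proof (rule cInf_greatest)
  show "{qform f | f. f \<in> ell2 m \<Omega> \<and> l2norm m f = 1} \<noteq> {}"
    using exists_unit_ell2[OF assms(1)] by blast
qed (use assms(2) in blast)

lemma rayleigh_bottom_mult_le:
  assumes f: "f \<in> ell2 m \<Omega>"
  shows "rayleigh_bottom \<Omega> * (l2norm m f)\<^sup>2 \<le> qform f"
proof (cases "l2norm m f = 0")
  case True
  then show ?thesis using energy_self[OF f] by simp
next
  case False
  define n where "n = l2norm m f"
  have n: "n > 0" using False l2norm_nonneg[of f] by (simp add: n_def)
  have "rayleigh_bottom \<Omega> \<le> qform (\<lambda>x. complex_of_real (1 / n) * f x)"
    unfolding n_def using l2norm_normalize[OF f False] by (rule rayleigh_bottom_le)
  also have "\<dots> = qform f / n\<^sup>2"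
    unfolding qform_scale norm_of_real using n by (simp add: power_divide)
  finally show ?thesis using n by (simp add: n_def le_divide_eq)
qed

lemma exists_qform_less:
  assumes "\<Omega> \<noteq> {}" and "\<epsilon> > 0"
  shows "\<exists>f\<in>ell2 m \<Omega>. l2norm m f = 1 \<and> qform f < rayleigh_bottom \<Omega> + \<epsilon>"
proof -
  have "{qform f | f. f \<in> ell2 m \<Omega> \<and> l2norm m f = 1} \<noteq> {}"
    using exists_unit_ell2[OF assms(1)] by blast
  from cInf_lessD[OF this, of "rayleigh_bottom \<Omega> + \<epsilon>"] show ?thesis
    using assms(2) unfolding rayleigh_bottom_def by auto
qed

lemma in_spectrum_iff:
  "complex_of_real t \<in> op_spectrum (ell2 m \<Omega>) (dirichlet_laplacian b m \<Omega>) \<longleftrightarrow>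
    \<not> bij_betw (lap_shift \<Omega> t) (ell2 m \<Omega>) (ell2 m \<Omega>)"
proof -
  have "bij_betw (\<lambda>f x. dirichlet_laplacian b m \<Omega> f x - complex_of_real t * f x) (ell2 m \<Omega>) (ell2 m \<Omega>)
    \<longleftrightarrow> bij_betw (lap_shift \<Omega> t) (ell2 m \<Omega>) (ell2 m \<Omega>)"
    by (rule bij_betw_cong) (simp add: dirichlet_laplacian_eq lap_shift_def)
  then show ?thesis by (simp add: op_spectrum_def)
qed

lemma not_in_spectrum_below_rayleigh_bottom:
  assumes "t < rayleigh_bottom \<Omega>"
  shows "complex_of_real t \<notin> op_spectrum (ell2 m \<Omega>) (dirichlet_laplacian b m \<Omega>)"
proof -
  interpret bounded_symmetric_operator m \<Omega> "lap_shift \<Omega> t" "2 * deg_bound + \<bar>t\<bar> + 1"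
    by (rule bounded_symmetric_operator_lap_shift)
  have "(rayleigh_bottom \<Omega> - t) * (l2norm m f)\<^sup>2 \<le> Re (l2inner m (lap_shift \<Omega> t f) f)"
    if "f \<in> ell2 m \<Omega>" for f
    using rayleigh_bottom_mult_le[OF that] lap_shift_Re[OF that] by (simp add: algebra_simps)
  moreover have "rayleigh_bottom \<Omega> - t > 0" using assms by simp
  ultimately have "bij_betw (lap_shift \<Omega> t) (ell2 m \<Omega>) (ell2 m \<Omega>)"
    by (rule bij_betw_if_coercive)
  then show ?thesis using in_spectrum_iff by blast
qed

lemma rayleigh_bottom_in_spectrum:
  assumes "\<Omega> \<noteq> {}"
  shows "complex_of_real (rayleigh_bottom \<Omega>) \<in> op_spectrum (ell2 m \<Omega>) (dirichlet_laplacian b m \<Omega>)"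
proof -
  let ?t = "rayleigh_bottom \<Omega>"
  interpret bounded_symmetric_operator m \<Omega> "lap_shift \<Omega> ?t" "2 * deg_bound + \<bar>?t\<bar> + 1"
    by (rule bounded_symmetric_operator_lap_shift)
  have "\<not> bij_betw (lap_shift \<Omega> ?t) (ell2 m \<Omega>) (ell2 m \<Omega>)"
  proof (rule not_bij_betw_if_approx_kernel)
    show "0 \<le> Re (l2inner m (lap_shift \<Omega> ?t f) f)" if "f \<in> ell2 m \<Omega>" for f
      using rayleigh_bottom_mult_le[OF that] lap_shift_Re[OF that] by simp
    show "\<exists>f\<in>ell2 m \<Omega>. l2norm m f = 1 \<and> Re (l2inner m (lap_shift \<Omega> ?t f) f) < \<epsilon>" if "\<epsilon> > 0" for \<epsilon>
      using exists_qform_less[OF assms that] lap_shift_Re by fastforce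
  qed
  then show ?thesis using in_spectrum_iff by blast
qed

theorem dirichlet_bottom_eq_rayleigh_bottom:
  assumes "\<Omega> \<noteq> {}"
  shows "dirichlet_bottom b m \<Omega> = rayleigh_bottom \<Omega>"
  unfolding dirichlet_bottom_def
  using rayleigh_bottom_in_spectrum[OF assms] not_in_spectrum_below_rayleigh_bottom
  by (intro cInf_eq_minimum) (auto simp: not_less[symmetric])

subsection \<open>The lower bound\<close>

fun plen :: "'a list \<Rightarrow> real" where
  "plen (u # v # r) = 1 / b u v + plen (v # r)" | "plen _ = 0"
fun pos_path :: "'a list \<Rightarrow> bool" where
  "pos_path (u # v # r) = (b u v > 0 \<and> pos_path (v # r))" | "pos_path _ = True"
fun path_energy :: "('a \<Rightarrow> complex) \<Rightarrow> 'a list \<Rightarrow> real" where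
  "path_energy f (u # v # r) = b u v * (cmod (f u - f v))\<^sup>2 + path_energy f (v # r)" | "path_energy f _ = 0"

lemma path_length_plen: "path_length b p = plen p"
proof (induction p rule: plen.induct)
  case (1 u v r)
  have "path_length b (u # v # r) = (\<Sum>i<Suc (length r). 1 / b ((u # v # r) ! i) ((u # v # r) ! Suc i))"
    by (simp add: path_length_def)
  also have "\<dots> = 1 / b u v + (\<Sum>i<length r. 1 / b ((v # r) ! i) ((v # r) ! Suc i))"
    by (subst sum.lessThan_Suc_shift) simp
  also have "(\<Sum>i<length r. 1 / b ((v # r) ! i) ((v # r) ! Suc i)) = path_length b (v # r)"
    by (simp add: path_length_def)
  finally show ?case using 1 by simp
qed (auto simp: path_length_def)

lemma pos_path_iff: "pos_path p \<longleftrightarrow> (\<forall>i. Suc i < length p \<longrightarrow> b (p ! i) (p ! Suc i) > 0)"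
proof (induction p rule: pos_path.induct)
  case (1 u v r)
  show ?case
  proof
    assume a: "pos_path (u # v # r)"
    show "\<forall>i. Suc i < length (u # v # r) \<longrightarrow> b ((u # v # r) ! i) ((u # v # r) ! Suc i) > 0"
    proof (intro allI impI)
      fix i assume i: "Suc i < length (u # v # r)"
      show "b ((u # v # r) ! i) ((u # v # r) ! Suc i) > 0"
      proof (cases i)
        case 0 then show ?thesis using a by simp
      next
        case (Suc j) then show ?thesis using a 1 i by simp
      qed
    qed
  next
    assume a: "\<forall>i. Suc i < length (u # v # r) \<longrightarrow> b ((u # v # r) ! i) ((u # v # r) ! Suc i) > 0"
    have "b u v > 0" using a[rule_format, of 0] by simp
    moreover have "\<forall>i. Suc i < length (v # r) \<longrightarrow> b ((v # r) ! i) ((v # r) ! Suc i) > 0"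
      using a by (auto dest: spec[of _ "Suc _"])
    ultimately show "pos_path (u # v # r)" using 1 by simp
  qed
qed auto

lemma pos_path_append: "pos_path (xs @ a # ys) \<longleftrightarrow> pos_path (xs @ [a]) \<and> pos_path (a # ys)"
  by (induction xs rule: induct_list012) auto

lemma plen_append: "plen (xs @ a # ys) = plen (xs @ [a]) + plen (a # ys)"
  by (induction xs rule: induct_list012) auto

lemma plen_nonneg: "pos_path p \<Longrightarrow> plen p \<ge> 0"
  by (induction p rule: plen.induct) auto

lemma path_energy_nonneg: "path_energy f p \<ge> 0"
  by (induction f p rule: path_energy.induct) (auto simp: b_nonneg)

lemma exists_distinct_path:
  "pos_path p \<Longrightarrow> p \<noteq> [] \<Longrightarrow> \<exists>q. pos_path q \<and> q \<noteq> [] \<and> hd q = hd p \<and> last q = last p \<and> distinct q \<and> plen q \<le> plen p"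
proof (induction "length p" arbitrary: p rule: less_induct)
  case less
  show ?case
  proof (cases "distinct p")
    case True then show ?thesis using less.prems by blast
  next
    case False
    then obtain xs ys zs a where p: "p = xs @ [a] @ ys @ [a] @ zs" using not_distinct_decomp by blast
    define q0 where "q0 = xs @ a # zs"
    have pp: "pos_path (xs @ [a])" "pos_path (a # ys @ a # zs)"
      using less.prems(1) pos_path_append[of xs a "ys @ a # zs"] p by auto
    have pp2: "pos_path ((a # ys) @ [a])" "pos_path (a # zs)"
      using pp(2) pos_path_append[of "a # ys" a zs] by auto
    have q0p: "pos_path q0" unfolding q0_def using pos_path_append pp(1) pp2(2) by blast
    have "plen p = plen (xs @ [a]) + plen (a # ys @ a # zs)"
      using p plen_append[of xs a "ys @ a # zs"] by simp
    also have "plen (a # ys @ a # zs) = plen ((a # ys) @ [a]) + plen (a # zs)"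
      using plen_append[of "a # ys" a zs] by simp
    finally have "plen q0 \<le> plen p"
      unfolding q0_def using plen_append[of xs a zs] plen_nonneg[OF pp2(1)] by simp
    moreover have "length q0 < length p" unfolding q0_def p by simp
    moreover have "hd q0 = hd p" unfolding q0_def p using hd_append_Cons[of xs a zs] hd_append_Cons[of xs a "ys @ [a] @ zs"] by simp
    moreover have "last q0 = last p" unfolding q0_def p by simp
    moreover have "q0 \<noteq> []" unfolding q0_def by simp
    ultimately show ?thesis using less.hyps[of q0] q0p by fastforce
  qed
qed

lemma path_energy_Cauchy_Schwarz: "pos_path p \<Longrightarrow> p \<noteq> [] \<Longrightarrow> (cmod (f (hd p) - f (last p)))\<^sup>2 \<le> plen p * path_energy f p"
proof (induction p rule: plen.induct)
  case (1 u v r)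
  have bp: "b u v > 0" and pr: "pos_path (v # r)" using 1 by auto
  have IH: "(cmod (f v - f (last (v # r))))\<^sup>2 \<le> plen (v # r) * path_energy f (v # r)" using 1 pr by simp
  have "cmod (f u - f (last (v # r))) \<le> cmod (f u - f v) + cmod (f v - f (last (v # r)))"
    using norm_triangle_ineq[of "f u - f v" "f v - f (last (v # r))"] by simp
  then have "(cmod (f u - f (last (v # r))))\<^sup>2 \<le> (cmod (f u - f v) + cmod (f v - f (last (v # r))))\<^sup>2"
    by (simp add: power_mono)
  also have "\<dots> \<le> (1 / b u v + plen (v # r)) * (b u v * (cmod (f u - f v))\<^sup>2 + path_energy f (v # r))"
    by (rule sq_add_le_Cauchy_Schwarz_step) (use bp plen_nonneg[OF pr] path_energy_nonneg IH in auto)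
  finally show ?case by simp
qed auto

lemma path_energy_edges: "path_energy f p = sum_list (map (\<lambda>(u,v). b u v * (cmod (f u - f v))\<^sup>2) (edges p))"
  by (induction f p rule: path_energy.induct) auto

lemma path_energy_le_qform:
  assumes f: "f \<in> ell2 m A" and d: "distinct p"
  shows "path_energy f p \<le> qform f"
proof -
  define w where "w = (\<lambda>(u,v). b u v * (cmod (f u - f v))\<^sup>2)"
  define E where "E = set (edges p)"
  have fin: "finite E" unfolding E_def by simp
  have e1: "path_energy f p = sum w E"
    unfolding path_energy_edges E_def w_def by (rule sum_list_distinct_conv_sum_set[OF edges_distinct[OF d]])
  have wsw: "w (prod.swap e) = w e" for e
    by (cases e) (simp add: w_def b_sym norm_minus_commute)
  have e2: "sum w (prod.swap ` E) = sum w E"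
    by (subst sum.reindex) (auto simp: wsw inj_on_def)
  have disj: "E \<inter> prod.swap ` E = {}" unfolding E_def using edges_antisym[OF d] by auto
  have u: "sum w (E \<union> prod.swap ` E) = sum w E + sum w (prod.swap ` E)"
    by (rule sum.union_disjoint[OF fin finite_imageI[OF fin] disj])
  have "2 * path_energy f p = sum w (E \<union> prod.swap ` E)" unfolding u e1 e2 by simp
  also have "\<dots> \<le> (\<Sum>\<^sub>\<infinity>e. w e)"
    by (rule finite_sum_le_infsum) (use qform_summable[OF f] fin in \<open>auto simp: w_def b_nonneg\<close>)
  also have "\<dots> = 2 * qform f" by (simp add: qform_def w_def)
  finally show ?thesis by simp
qed

lemma cmod_sq_le_path_length:
  assumes f: "f \<in> ell2 m \<Omega>" and y: "y \<notin> \<Omega>" and p: "is_path b p x y"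
  shows "(cmod (f x))\<^sup>2 \<le> path_length b p * qform f"
proof -
  have pp: "pos_path p" "p \<noteq> []" "hd p = x" "last p = y" using p by (auto simp: is_path_def pos_path_iff)
  obtain q where q: "pos_path q" "q \<noteq> []" "hd q = x" "last q = y" "distinct q" "plen q \<le> plen p"
    using exists_distinct_path[OF pp(1,2)] pp by auto
  have fy: "f y = 0" using f y by (simp add: ell2_iff)
  have "(cmod (f x))\<^sup>2 = (cmod (f (hd q) - f (last q)))\<^sup>2" using q fy by simp
  also have "\<dots> \<le> plen q * path_energy f q" by (rule path_energy_Cauchy_Schwarz[OF q(1,2)])
  also have "\<dots> \<le> plen p * qform f"
    by (rule mult_mono) (use q path_energy_le_qform[OF f q(5)] plen_nonneg[OF pp(1)] path_energy_nonneg in auto)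
  finally show ?thesis by (simp add: path_length_plen)
qed

lemma l2norm_sq_le_inradius_vol_qform:
  assumes conn: "graph_connected b" and fin: "inradius b \<Omega> < \<infinity>" and vf: "vol m \<Omega> < \<infinity>"
    and f: "f \<in> ell2 m \<Omega>"
  shows "(l2norm m f)\<^sup>2 \<le> real_of_ereal (inradius b \<Omega>) * enn2real (vol m \<Omega>) * qform f"
proof -
  define R where "R = real_of_ereal (inradius b \<Omega>)"
  have E0: "qform f \<ge> 0" using energy_self[OF f] by simp
  have pt: "(cmod (f x))\<^sup>2 \<le> R * qform f" if x: "x \<in> \<Omega>" for x
  proof (rule le_mult_if_le_add_eps_mult[OF E0])
    fix \<epsilon> :: real assume e: "\<epsilon> > 0"
    obtain y where y: "y \<notin> \<Omega>" "gdist b x y < R + \<epsilon>" using exists_outside_gdist_less[OF x e fin] by (auto simp: R_def)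
    obtain p where p: "is_path b p x y" "path_length b p < R + \<epsilon>" using exists_path_length_less[OF conn y(2)] by blast
    have "(cmod (f x))\<^sup>2 \<le> path_length b p * qform f" by (rule cmod_sq_le_path_length[OF f y(1) p(1)])
    also have "\<dots> \<le> (R + \<epsilon>) * qform f" using p(2) E0 by (simp add: mult_right_mono)
    finally show "(cmod (f x))\<^sup>2 \<le> (R + \<epsilon>) * qform f" .
  qed
  have mS: "m summable_on \<Omega>" by (rule vol_finite(1)[OF vf])
  have "(l2norm m f)\<^sup>2 = (\<Sum>\<^sub>\<infinity>x\<in>\<Omega>. l2dens f x)"
    unfolding l2norm_power2 by (rule infsum_cong_neutral) (use f in \<open>auto simp: ell2_iff l2dens_def\<close>)
  also have "\<dots> \<le> (\<Sum>\<^sub>\<infinity>x\<in>\<Omega>. (R * qform f) * m x)"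
  proof (rule infsum_mono)
    show "l2dens f summable_on \<Omega>" using ell2_summable[OF f] by (rule summable_on_subset) simp
    show "(\<lambda>x. (R * qform f) * m x) summable_on \<Omega>" by (rule summable_on_cmult_right[OF mS])
    fix x assume "x \<in> \<Omega>"
    then show "l2dens f x \<le> (R * qform f) * m x" unfolding l2dens_def using pt by (intro mult_right_mono) auto
  qed
  also have "\<dots> = R * qform f * enn2real (vol m \<Omega>)" by (simp add: infsum_cmult_right' vol_finite(3)[OF vf])
  finally show ?thesis by (simp add: R_def algebra_simps)
qed

lemma inradius_vol_bound_le_rayleigh_bottom:
  assumes "graph_connected b" and "\<Omega> \<noteq> {}" and "inradius b \<Omega> < \<infinity>" and "vol m \<Omega> < \<infinity>"
  shows "1 / (real_of_ereal (inradius b \<Omega>) * enn2real (vol m \<Omega>)) \<le> rayleigh_bottom \<Omega>"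
proof (rule rayleigh_bottom_greatest[OF assms(2)])
  fix f assume f: "f \<in> ell2 m \<Omega>" "l2norm m f = 1"
  define c where "c = real_of_ereal (inradius b \<Omega>) * enn2real (vol m \<Omega>)"
  have "1 \<le> c * qform f"
    using l2norm_sq_le_inradius_vol_qform[OF assms(1,3,4) f(1)] f(2) by (simp add: c_def)
  moreover have "c \<ge> 0" using inradius_nonneg[of b \<Omega>] by (simp add: c_def)
  ultimately show "1 / c \<le> qform f"
    using energy_self[OF f(1)] by (cases "c = 0") (simp_all add: divide_le_eq mult.commute)
qed

subsection \<open>The upper bound\<close>

lemma qform_le_laplacian_norm:
  assumes g: "g \<in> ell2 m UNIV"
  shows "qform g \<le> laplacian_norm b m * (l2norm m g)\<^sup>2"
proof -
  have "qform g = Re (energy b g g)" using energy_self[OF g] by simp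
  also have "\<dots> = Re (l2inner m (laplacian b m g) g)" using energy_eq_l2inner_laplacian[OF g g] by simp
  also have "\<dots> \<le> cmod (l2inner m (laplacian b m g) g)" by (rule complex_Re_le_cmod)
  also have "\<dots> \<le> l2norm m (laplacian b m g) * l2norm m g"
    by (rule l2inner_Cauchy_Schwarz[OF laplacian_ell2(1)[OF g] g])
  also have "\<dots> \<le> laplacian_norm b m * l2norm m g * l2norm m g"
    using l2norm_laplacian_le_laplacian_norm[OF g] l2norm_nonneg[of g] by (simp add: mult_right_mono)
  finally show ?thesis by (simp add: power2_eq_square)
qed

lemma qform_indicator_le:
  assumes mO: "m summable_on \<Omega>" and mC: "m summable_on (- \<Omega>)"
    and A: "A = (\<Sum>\<^sub>\<infinity>x\<in>\<Omega>. m x)" and B: "B = (\<Sum>\<^sub>\<infinity>x\<in>-\<Omega>. m x)"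
  shows "(A + B)\<^sup>2 * qform (\<lambda>x. if x \<in> \<Omega> then 1 else 0) \<le> laplacian_norm b m * (A * B * (A + B))"
proof -
  define g where "g = (\<lambda>x. if x \<in> \<Omega> then complex_of_real B else complex_of_real (- A))"
  have ng: "l2dens g = (\<lambda>x. (if x \<in> \<Omega> then B\<^sup>2 * m x else 0) + (if x \<in> - \<Omega> then A\<^sup>2 * m x else 0))"
    by (auto simp: fun_eq_iff l2dens_def g_def)
  have s1: "((\<lambda>x. if x \<in> \<Omega> then B\<^sup>2 * m x else 0) has_sum B\<^sup>2 * A) UNIV"
    using has_sum_extend_zero[OF summable_on_cmult_right[OF mO]] by (simp add: infsum_cmult_right' A)
  have s2: "((\<lambda>x. if x \<in> - \<Omega> then A\<^sup>2 * m x else 0) has_sum A\<^sup>2 * B) UNIV"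
    using has_sum_extend_zero[OF summable_on_cmult_right[OF mC]] by (simp add: infsum_cmult_right' B)
  have gU: "g \<in> ell2 m UNIV" and gn: "(l2norm m g)\<^sup>2 = B\<^sup>2 * A + A\<^sup>2 * B"
    using has_sum_add[OF s1 s2] unfolding l2norm_power2 ng
    by (auto simp: ell2_iff ng has_sum_imp_summable infsumI)
  have "(A + B)\<^sup>2 * qform (\<lambda>x. if x \<in> \<Omega> then 1 else 0) =
      qform (\<lambda>x. complex_of_real (A + B) * (if x \<in> \<Omega> then 1 else 0))"
    unfolding qform_scale norm_of_real by simp
  also have "\<dots> = qform g"
    by (rule qform_cong) (auto simp: g_def algebra_simps)
  also have "\<dots> \<le> laplacian_norm b m * (l2norm m g)\<^sup>2" by (rule qform_le_laplacian_norm[OF gU])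
  also have "\<dots> = laplacian_norm b m * (A * B * (A + B))" unfolding gn by (simp add: power2_eq_square algebra_simps)
  finally show ?thesis .
qed

lemma rayleigh_bottom_le_vol_ratio:
  assumes vU: "vol m UNIV < \<infinity>" and vO: "vol m \<Omega> < \<infinity>" and ne: "\<Omega> \<noteq> {}"
  shows "rayleigh_bottom \<Omega> \<le>
    laplacian_norm b m * (enn2real (vol m UNIV) - enn2real (vol m \<Omega>)) / enn2real (vol m UNIV)"
proof -
  define N where "N = laplacian_norm b m"
  have mU: "m summable_on UNIV" by (rule vol_finite(1)[OF vU])
  have mO: "m summable_on \<Omega>" by (rule vol_finite(1)[OF vO])
  have mC: "m summable_on (- \<Omega>)" using mU by (rule summable_on_subset) simp
  define A where "A = (\<Sum>\<^sub>\<infinity>x\<in>\<Omega>. m x)"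
  define B where "B = (\<Sum>\<^sub>\<infinity>x\<in>-\<Omega>. m x)"
  have "(\<Sum>\<^sub>\<infinity>x\<in>\<Omega> \<union> -\<Omega>. m x) = A + B" unfolding A_def B_def by (rule infsum_Un_disjoint[OF mO mC]) simp
  then have eX: "enn2real (vol m UNIV) = A + B" using vol_finite(3)[OF vU] by simp
  have eA: "enn2real (vol m \<Omega>) = A" using vol_finite(3)[OF vO] by (simp add: A_def)
  obtain x0 where x0: "x0 \<in> \<Omega>" using ne by blast
  have "sum m {x0} \<le> A" unfolding A_def by (rule finite_sum_le_infsum[OF mO]) (use x0 in auto)
  then have Ap: "A > 0" using weight_pos[of x0] by simp
  have Bn: "B \<ge> 0" unfolding B_def by (intro infsum_nonneg) simp
  define u where "u = (\<lambda>x. if x \<in> \<Omega> then (1::complex) else 0)"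
  have nu: "l2dens u = (\<lambda>x. if x \<in> \<Omega> then m x else 0)" by (auto simp: fun_eq_iff l2dens_def u_def)
  have uV: "u \<in> ell2 m \<Omega>"
    using has_sum_imp_summable[OF has_sum_extend_zero[OF mO]] by (simp add: ell2_iff nu) (simp add: u_def)
  have "(l2norm m u)\<^sup>2 = A"
    unfolding l2norm_power2 nu infsumI[OF has_sum_extend_zero[OF mO]] A_def ..
  then have "rayleigh_bottom \<Omega> * A \<le> qform u" using rayleigh_bottom_mult_le[OF uV] by simp
  then have "(A + B)\<^sup>2 * (rayleigh_bottom \<Omega> * A) \<le> N * (A * B * (A + B))"
    using qform_indicator_le[OF mO mC A_def B_def] mult_left_mono[of _ "qform u" "(A + B)\<^sup>2"]
    unfolding u_def N_def by fastforce
  then have "A * (A + B) * ((A + B) * rayleigh_bottom \<Omega>) \<le> A * (A + B) * (N * B)"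
    by (simp add: power2_eq_square algebra_simps)
  then have "(A + B) * rayleigh_bottom \<Omega> \<le> N * B" using Ap Bn by (simp add: add_pos_nonneg)
  then have "rayleigh_bottom \<Omega> \<le> N * B / (A + B)" using Ap Bn by (simp add: le_divide_eq mult.commute)
  then show ?thesis unfolding eX eA N_def by simp
qed
end

theorem theorem3p2:
  fixes b :: "'a::countable \<Rightarrow> 'a \<Rightarrow> real" and m :: "'a \<Rightarrow> real" and \<Omega> :: "'a set"
  assumes "weighted_graph b m" and "graph_connected b" and "condB b m" and "condM m"
    and "\<Omega> \<noteq> {}" and "\<Omega> \<noteq> UNIV"
    and "vol m \<Omega> < \<infinity>" and "inradius b \<Omega> < \<infinity>"
  shows "dirichlet_bottom b m \<Omega> \<ge> 1 / (real_of_ereal (inradius b \<Omega>) * enn2real (vol m \<Omega>)) \<and>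
    (vol m UNIV < \<infinity> \<longrightarrow>
       dirichlet_bottom b m \<Omega> \<le> laplacian_norm b m *
         (enn2real (vol m UNIV) - enn2real (vol m \<Omega>)) / enn2real (vol m UNIV))"
proof -
  interpret bounded_weighted_graph b m
    using assms(1,3) by unfold_locales
  have bottom: "dirichlet_bottom b m \<Omega> = rayleigh_bottom \<Omega>"
    by (rule dirichlet_bottom_eq_rayleigh_bottom[OF assms(5)])
  show ?thesis
    using inradius_vol_bound_le_rayleigh_bottom[OF assms(2,5,8,7)]
      rayleigh_bottom_le_vol_ratio[OF _ assms(7,5)]
    unfolding bottom by blast
qed

end
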